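(* Let $m$ be an odd positive integer, and consider integer representations by the quadratic form $x^2+y^2+2z^2+2w^2$. (i) The number of $(x,y,z,w)\in\mathbb{Z}^4$ with $x^2+y^2+2z^2+2w^2=4m$, $x,y$ even and $z,w$ odd, is $4\sigma(m)$. (ii) The number of $(x,y,z,w)\in\mathbb{Z}^4$ with $x^2+y^2+2z^2+2w^2=8m$, $x,y$ even and $z,w$ odd, is $16\sigma(m)$. (iii) The number of $(x,y,z,w)\in\mathbb{Z}^4$ with $x^2+y^2+2z^2+2w^2=4m$, $x,y$ odd and $z,w$ of different parity, is $16\sigma(m)$.
   Context: $\sigma(m)$ denotes the sum of the positive divisors of $m$. *)

theory Defs
  imports Main
begin

definition sigma :: "nat \<Rightarrow> nat" where
  "sigma m = (\<Sum>d\<in>{d. d dvd m}. d)"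

end

theory Submission
  imports Defs Complex_Main "HOL-Computational_Algebra.Primes"
begin

section \<open>The divisor sum\<close>

lemma divisors_prime_mult:
  fixes p m :: nat
  assumes p: "prime p"
  shows "{d. d dvd p * m} = {d. d dvd m} \<union> (*) p ` {d. d dvd m}"
proof (intro equalityI subsetI)
  fix d assume "d \<in> {d. d dvd p * m}"
  then have d: "d dvd p * m" by simp
  show "d \<in> {d. d dvd m} \<union> (*) p ` {d. d dvd m}"
  proof (cases "p dvd d")
    case True
    then obtain e where "d = p * e" by blast
    then show ?thesis using d p prime_gt_0_nat by auto
  next
    case False
    then have "coprime d p" using prime_imp_coprime[OF p] by (simp add: coprime_commute)
    then show ?thesis using d coprime_dvd_mult_right_iff by blast
  qed
qed auto

lemma divisors_inter_prime_mult:
  fixes p m :: nat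
  assumes p: "prime p"
  shows "{d. d dvd m} \<inter> (*) p ` {d. d dvd m} = (if p dvd m then (*) p ` {d. d dvd m div p} else {})"
proof (cases "p dvd m")
  case True
  then obtain k where k: "m = p * k" by blast
  have "p > 0" using p prime_gt_0_nat by blast
  then show ?thesis using k True by (auto intro: dvd_mult_left)
next
  case False
  then show ?thesis by (auto dest: dvd_mult_left)
qed

lemma sigma_prime_mult:
  assumes p: "prime p" and "m > 0"
  shows "sigma (p * m) + p * (if p dvd m then sigma (m div p) else 0) = (p + 1) * sigma m"
proof -
  have fin: "finite {d. d dvd m}" using \<open>m > 0\<close> by simp
  have scale: "(\<Sum>d\<in>(*) p ` X. d) = p * (\<Sum>d\<in>X. d)" for X
    using p prime_gt_0_nat by (simp add: sum.reindex inj_on_def sum_distrib_left)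
  have "sigma (p * m) + (\<Sum>d\<in>{d. d dvd m} \<inter> (*) p ` {d. d dvd m}. d) = sigma m + p * sigma m"
    unfolding sigma_def divisors_prime_mult[OF p]
    using sum.union_inter[OF fin finite_imageI[OF fin], of "\<lambda>d. d"] scale[of "{d. d dvd m}"] by simp
  then show ?thesis
    unfolding divisors_inter_prime_mult[OF p] by (cases "p dvd m") (simp_all add: scale sigma_def)
qed

lemma odd_eq_sigma_if_hecke:
  fixes f :: "nat \<Rightarrow> nat"
  assumes hecke: "\<And>p m. prime p \<Longrightarrow> odd p \<Longrightarrow> odd m \<Longrightarrow>
      f (p * m) + p * (if p dvd m then f (m div p) else 0) = (p + 1) * f m"
  shows "odd n \<Longrightarrow> f n = f 1 * sigma n"
proof (induction n rule: less_induct)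
  case (less n)
  show ?case
  proof (cases "n = 1")
    case True
    then show ?thesis by (simp add: sigma_def)
  next
    case False
    then have "n > 1" using less.prems by (cases n) auto
    then obtain p where p: "prime p" "p dvd n" using prime_factor_nat[of n] by auto
    then obtain m where n: "n = p * m" by blast
    have "odd p" "odd m" using less.prems n by auto
    have "m > 0" "m < n" using n \<open>n > 1\<close> p(1) prime_gt_1_nat by (auto intro: Nat.gr0I)
    define D where "D = (if p dvd m then sigma (m div p) else 0)"
    have "f (p * m) + f 1 * (p * D) = f 1 * ((p + 1) * sigma m)"
    proof (cases "p dvd m")
      case True
      have "m div p < n" using \<open>m < n\<close> by (auto intro: le_less_trans[OF div_le_dividend])
      moreover have "odd (m div p)" using \<open>odd m\<close> True by (metis dvd_mult_div_cancel even_mult_iff)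
      ultimately show ?thesis
        using hecke[OF p(1) \<open>odd p\<close> \<open>odd m\<close>] less.IH[OF \<open>m < n\<close> \<open>odd m\<close>] less.IH True
        unfolding D_def by (simp add: algebra_simps)
    next
      case False
      then show ?thesis
        using hecke[OF p(1) \<open>odd p\<close> \<open>odd m\<close>] less.IH[OF \<open>m < n\<close> \<open>odd m\<close>]
        unfolding D_def by (simp add: algebra_simps)
    qed
    moreover have "f 1 * ((p + 1) * sigma m) = f 1 * sigma (p * m) + f 1 * (p * D)"
      using sigma_prime_mult[OF p(1) \<open>m > 0\<close>] unfolding D_def by (simp add: distrib_left[symmetric])
    ultimately have "f (p * m) = f 1 * sigma (p * m)" by simp
    then show ?thesis using n by simp
  qed
qed

section \<open>Sums of squares modulo an odd prime\<close>

locale odd_prime =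
  fixes P :: int
  assumes prime_P: "prime P" and odd_P: "odd P"
begin

definition R :: "int set" where "R = {0..<P}"

definition r2 :: "int \<Rightarrow> nat" where
  "r2 t = card {(a, b). a \<in> R \<and> b \<in> R \<and> (a^2 + b^2) mod P = t}"

definition null_quadruples :: "(int \<times> int \<times> int \<times> int) set" where
  "null_quadruples =
     {(a, b, c, d). a \<in> R \<and> b \<in> R \<and> c \<in> R \<and> d \<in> R \<and> P dvd a^2 + b^2 + c^2 + d^2}"

lemma P_gt_1: "P > 1" using prime_P prime_gt_1_int by blast
lemma P_ge_3: "P \<ge> 3" using P_gt_1 odd_P by presburger
lemma not_P_dvd_2: "\<not> P dvd 2" using P_ge_3 zdvd_imp_le[of P 2] by auto
lemma P_dvd_mult_iff: "P dvd a * b \<longleftrightarrow> P dvd a \<or> P dvd b"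
  using prime_P by (rule prime_dvd_mult_iff)

lemma finite_R: "finite R" by (simp add: R_def)
lemma card_R: "card R = nat P" by (simp add: R_def)
lemma mod_in_R: "x mod P \<in> R" using P_gt_1 by (simp add: R_def)
lemma zero_in_R: "0 \<in> R" and one_in_R: "1 \<in> R" using P_gt_1 by (simp_all add: R_def)

lemma R_eqI: "a \<in> R \<Longrightarrow> b \<in> R \<Longrightarrow> P dvd a - b \<Longrightarrow> a = b"
  using dvd_imp_le_int[of "a - b" P] by (force simp: R_def)

lemma not_P_dvd_R: "t \<in> R \<Longrightarrow> t \<noteq> 0 \<Longrightarrow> \<not> P dvd t"
  using R_eqI[of t 0] zero_in_R by auto

lemma inverse_mod_exists: "\<not> P dvd c \<Longrightarrow> \<exists>c'. P dvd c * c' - 1"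
proof -
  assume "\<not> P dvd c"
  then have "coprime P c" using prime_P by (rule_tac prime_imp_coprime) auto
  then have "gcd c P = 1" by (simp add: coprime_iff_gcd_eq_1 gcd.commute)
  then obtain u v where "u * c + v * P = 1" using bezout_int[of c P] by auto
  then have "c * u - 1 = P * (- v)" by (simp add: algebra_simps)
  then show ?thesis by (intro exI[of _ u]) (metis dvd_triv_left)
qed

lemma square_mod_inj_on_half:
  assumes "a \<in> {0..(P - 1) div 2}" "a' \<in> {0..(P - 1) div 2}" "P dvd a^2 - a'^2"
  shows "a = a'"
proof -
  have "a^2 - a'^2 = (a - a') * (a + a')" by (simp add: power2_eq_square algebra_simps)
  then have "P dvd a - a' \<or> P dvd a + a'" using assms(3) P_dvd_mult_iff by auto
  moreover have "a \<in> R" "a' \<in> R" "a + a' \<in> R" using assms by (auto simp: R_def)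
  ultimately show ?thesis using R_eqI[of a a'] R_eqI[of "a + a'" 0] zero_in_R assms(1,2) by auto
qed

text \<open>Pigeonhole: the \<open>(P + 1) / 2\<close> values of \<open>a\<^sup>2\<close> and of \<open>t - b\<^sup>2\<close> cannot be disjoint
  modulo \<open>P\<close>.\<close>

lemma sum_two_squares_mod: "\<exists>a\<in>R. \<exists>b\<in>R. (a^2 + b^2) mod P = t mod P"
proof (rule ccontr)
  assume none: "\<not> ?thesis"
  define H where "H = {0..(P - 1) div 2}"
  define f where "f a = a^2 mod P" for a
  define g where "g b = (t - b^2) mod P" for b
  have "inj_on f H"
    by (rule inj_onI) (use square_mod_inj_on_half in \<open>auto simp: f_def H_def mod_eq_dvd_iff\<close>)
  moreover have "inj_on g H"
  proof (rule inj_onI)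
    fix x y assume "x \<in> H" "y \<in> H" "g x = g y"
    then have "P dvd y^2 - x^2" by (simp add: g_def mod_eq_dvd_iff)
    then show "x = y" using square_mod_inj_on_half \<open>x \<in> H\<close> \<open>y \<in> H\<close> unfolding H_def by metis
  qed
  moreover have "f ` H \<inter> g ` H = {}"
  proof (rule ccontr)
    assume "f ` H \<inter> g ` H \<noteq> {}"
    then obtain a b where ab: "a \<in> H" "b \<in> H" "f a = g b" by blast
    then have "P dvd a^2 - (t - b^2)" by (simp add: f_def g_def mod_eq_dvd_iff)
    then have "(a^2 + b^2) mod P = t mod P" by (simp add: mod_eq_dvd_iff algebra_simps)
    moreover have "a \<in> R" "b \<in> R" using ab P_gt_1 by (auto simp: H_def R_def)
    ultimately show False using none by blast
  qed
  moreover have "finite H" by (simp add: H_def)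
  ultimately have "card (f ` H \<union> g ` H) = 2 * card H"
    by (simp add: card_Un_disjoint card_image)
  also have "card H = nat ((P - 1) div 2 + 1)" by (simp add: H_def)
  also have "2 * \<dots> = nat P + 1" using odd_P P_gt_1 by (auto elim!: oddE)
  finally have "card (f ` H \<union> g ` H) > card R" using card_R by simp
  moreover have "f ` H \<union> g ` H \<subseteq> R" using mod_in_R by (auto simp: f_def g_def)
  ultimately show False using card_mono[OF finite_R, of "f ` H \<union> g ` H"] by linarith
qed

lemma sum_squares_mod: "((x mod P)^2 + (y mod P)^2) mod P = (x^2 + y^2) mod P"
proof -
  have "((x mod P)^2 + (y mod P)^2) mod P = ((x mod P)^2 mod P + (y mod P)^2 mod P) mod P"
    by (rule mod_add_eq[symmetric])
  also have "\<dots> = (x^2 mod P + y^2 mod P) mod P" by (simp only: power_mod)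
  finally show ?thesis by (simp only: mod_add_eq)
qed

text \<open>The map \<open>(a, b) \<mapsto> (a c - b d, a d + b c)\<close> is multiplication by \<open>c + d i\<close>; it is injective
  modulo \<open>P\<close> when \<open>P\<close> does not divide the norm \<open>c\<^sup>2 + d\<^sup>2\<close>, and norms multiply.\<close>

lemma r2_le_r2_mult:
  assumes "\<not> P dvd c^2 + d^2"
  shows "r2 t \<le> r2 ((t * (c^2 + d^2)) mod P)"
proof -
  define S where "S s = {(a, b). a \<in> R \<and> b \<in> R \<and> (a^2 + b^2) mod P = s}" for s
  define h where "h = (\<lambda>(a, b). ((a * c - b * d) mod P, (a * d + b * c) mod P))"
  have "h ` S t \<subseteq> S ((t * (c^2 + d^2)) mod P)"
  proof
    fix z assume "z \<in> h ` S t"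
    then obtain a b where ab: "(a^2 + b^2) mod P = t" "z = h (a, b)" unfolding S_def by auto
    have "(a * c - b * d)^2 + (a * d + b * c)^2 = (a^2 + b^2) * (c^2 + d^2)"
      by (simp add: power2_eq_square algebra_simps)
    then have "(((a * c - b * d) mod P)^2 + ((a * d + b * c) mod P)^2) mod P = (t * (c^2 + d^2)) mod P"
      using ab(1) sum_squares_mod by (metis mod_mult_left_eq)
    then show "z \<in> S ((t * (c^2 + d^2)) mod P)" using ab(2) mod_in_R unfolding S_def h_def by auto
  qed
  moreover have "inj_on h (S t)"
  proof (rule inj_onI)
    fix z z' assume z: "z \<in> S t" "z' \<in> S t" "h z = h z'"
    obtain a b a' b' where ab: "z = (a, b)" "z' = (a', b')" "a \<in> R" "b \<in> R" "a' \<in> R" "b' \<in> R"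
      using z(1,2) unfolding S_def by auto
    define x where "x = a - a'"
    define y where "y = b - b'"
    have e1: "P dvd x * c - y * d" and e2: "P dvd x * d + y * c"
      using z(3) unfolding ab h_def x_def y_def by (auto simp: mod_eq_dvd_iff algebra_simps)
    have "x * (c^2 + d^2) = (x * c - y * d) * c + (x * d + y * c) * d"
      "y * (c^2 + d^2) = (x * d + y * c) * c - (x * c - y * d) * d"
      by (simp_all add: power2_eq_square algebra_simps)
    then have "P dvd x * (c^2 + d^2)" "P dvd y * (c^2 + d^2)" using e1 e2 by simp_all
    then have "P dvd x" "P dvd y" using assms P_dvd_mult_iff by blast+
    then show "z = z'" using ab R_eqI unfolding x_def y_def by auto
  qed
  moreover have "finite (S s)" for s
    by (rule finite_subset[of _ "R \<times> R"]) (auto simp: S_def finite_R)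
  ultimately show ?thesis unfolding r2_def S_def[symmetric] by (metis card_image card_mono)
qed

lemma r2_le_nonzero:
  assumes t: "t \<in> R" "t \<noteq> 0" and t': "t' \<in> R" "t' \<noteq> 0"
  shows "r2 t \<le> r2 t'"
proof -
  obtain ti where ti: "P dvd t * ti - 1" using inverse_mod_exists not_P_dvd_R[OF t] by blast
  have "\<not> P dvd ti"
  proof
    assume "P dvd ti"
    then have "P dvd t * ti - (t * ti - 1)" by (intro dvd_diff ti) simp
    then show False using P_gt_1 by simp
  qed
  then have "\<not> P dvd t' * ti" using not_P_dvd_R[OF t'] P_dvd_mult_iff by blast
  obtain c d where cd: "(c^2 + d^2) mod P = (t' * ti) mod P" using sum_two_squares_mod by blast
  then have nd: "\<not> P dvd c^2 + d^2" using \<open>\<not> P dvd t' * ti\<close> by (simp add: dvd_eq_mod_eq_0)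
  have "(t * (c^2 + d^2)) mod P = (t * (t' * ti)) mod P" using cd by (metis mod_mult_right_eq)
  also have "\<dots> = t' mod P"
  proof -
    have "t * (t' * ti) - t' = t' * (t * ti - 1)" by (simp add: algebra_simps)
    then show ?thesis using ti by (simp add: mod_eq_dvd_iff)
  qed
  finally show ?thesis using r2_le_r2_mult[OF nd, of t] t' by (simp add: R_def)
qed

lemma r2_nonzero: "t \<in> R \<Longrightarrow> t \<noteq> 0 \<Longrightarrow> r2 t = r2 1"
  using r2_le_nonzero[of t 1] r2_le_nonzero[of 1 t] one_in_R by simp

lemma r2_zero_if_no_sqrt_minus_1:
  assumes "\<not> (\<exists>i. P dvd i^2 + 1)"
  shows "r2 0 = 1"
proof -
  have "{(a, b). a \<in> R \<and> b \<in> R \<and> (a^2 + b^2) mod P = 0} = {(0, 0)}"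
  proof (intro equalityI subsetI)
    fix z assume "z \<in> {(a, b). a \<in> R \<and> b \<in> R \<and> (a^2 + b^2) mod P = 0}"
    then obtain a b where ab: "z = (a, b)" "a \<in> R" "b \<in> R" "P dvd a^2 + b^2"
      by (auto simp: dvd_eq_mod_eq_0)
    have "b = 0"
    proof (rule ccontr)
      assume "b \<noteq> 0"
      then obtain bi where bi: "P dvd b * bi - 1" using inverse_mod_exists not_P_dvd_R ab(3) by blast
      have "(a * bi)^2 + 1 = bi^2 * (a^2 + b^2) - (b * bi - 1) * (b * bi + 1)"
        by (simp add: power2_eq_square algebra_simps)
      then have "P dvd (a * bi)^2 + 1" using ab(4) bi by simp
      then show False using assms by blast
    qed
    then have "a = 0" using ab P_dvd_mult_iff not_P_dvd_R by (auto simp: power2_eq_square)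
    then show "z \<in> {(0, 0)}" using ab \<open>b = 0\<close> by simp
  qed (use zero_in_R in auto)
  then show ?thesis unfolding r2_def by simp
qed

text \<open>If \<open>i\<^sup>2 \<equiv> -1\<close>, then \<open>a\<^sup>2 + b\<^sup>2 \<equiv> (a - i b) (a + i b)\<close>, so the solutions of \<open>a\<^sup>2 + b\<^sup>2 \<equiv> 0\<close>
  besides \<open>(0, 0)\<close> lie on the two lines \<open>a \<equiv> \<plusminus>i b\<close>.\<close>

lemma r2_zero_if_sqrt_minus_1:
  assumes i: "P dvd i^2 + 1"
  shows "r2 0 = 2 * nat P - 1"
proof -
  have "\<not> P dvd i" using i P_gt_1 by (metis dvd_add_right_iff dvd_mult2 power2_eq_square zdvd_not_zless zero_less_one)
  define R' where "R' = R - {0}"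
  define f where "f s b = ((s * i * b) mod P, b)" for s b
  have on_line: "(((s * i * b) mod P)^2 + b^2) mod P = 0" if "s^2 = 1" for s b
  proof -
    have "(((s * i * b) mod P)^2 + b^2) mod P = ((s * i * b)^2 + b^2) mod P"
      by (metis mod_add_left_eq power_mod)
    also have "(s * i * b)^2 + b^2 = b^2 * (i^2 + 1)" using that by (simp add: power_mult_distrib algebra_simps)
    finally show ?thesis using i by (simp add: dvd_eq_mod_eq_0[symmetric])
  qed
  have "{(a, b). a \<in> R \<and> b \<in> R \<and> (a^2 + b^2) mod P = 0} = {(0, 0)} \<union> (f 1 ` R' \<union> f (- 1) ` R')"
  proof (intro equalityI subsetI)
    fix z assume "z \<in> {(a, b). a \<in> R \<and> b \<in> R \<and> (a^2 + b^2) mod P = 0}"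
    then obtain a b where ab: "z = (a, b)" "a \<in> R" "b \<in> R" "P dvd a^2 + b^2"
      by (auto simp: dvd_eq_mod_eq_0)
    show "z \<in> {(0, 0)} \<union> (f 1 ` R' \<union> f (- 1) ` R')"
    proof (cases "b = 0")
      case True
      then show ?thesis using ab P_dvd_mult_iff not_P_dvd_R by (auto simp: power2_eq_square)
    next
      case False
      have "(a - i * b) * (a + i * b) = (a^2 + b^2) - b^2 * (i^2 + 1)"
        by (simp add: power2_eq_square algebra_simps)
      then have "P dvd (a - i * b) * (a + i * b)" using ab(4) i by simp
      then have "P dvd a - 1 * i * b \<or> P dvd a - (- 1) * i * b" using P_dvd_mult_iff by simp
      then have "a = (1 * i * b) mod P \<or> a = (- 1 * i * b) mod P"
        using ab(2) mod_in_R R_eqI by (metis mod_eq_dvd_iff mod_mod_trivial dvd_minus_mod)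
      then show ?thesis using ab False unfolding f_def R'_def by auto
    qed
  next
    have "((i * b mod P)^2 + b^2) mod P = 0" "((- (i * b) mod P)^2 + b^2) mod P = 0" for b
      using on_line[of 1 b] on_line[of "- 1" b] by simp_all
    then show "z \<in> {(a, b). a \<in> R \<and> b \<in> R \<and> (a^2 + b^2) mod P = 0}"
      if "z \<in> {(0, 0)} \<union> (f 1 ` R' \<union> f (- 1) ` R')" for z
      using that zero_in_R mod_in_R unfolding f_def R'_def by auto
  qed
  moreover have "f 1 ` R' \<inter> f (- 1) ` R' = {}"
  proof (rule ccontr)
    assume "f 1 ` R' \<inter> f (- 1) ` R' \<noteq> {}"
    then obtain b where "b \<in> R'" "P dvd i * b - (- i * b)" unfolding f_def by (auto simp: mod_eq_dvd_iff)
    then have "P dvd 2 * i * b" by (simp add: algebra_simps)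
    then show False
      using \<open>b \<in> R'\<close> \<open>\<not> P dvd i\<close> not_P_dvd_2 P_dvd_mult_iff not_P_dvd_R unfolding R'_def by blast
  qed
  moreover have "(0, 0) \<notin> f 1 ` R' \<union> f (- 1) ` R'" "inj_on (f s) R'" for s
    unfolding f_def R'_def by (auto intro: inj_onI)
  moreover have "finite R'" "card R' = nat P - 1" using card_R zero_in_R finite_R by (simp_all add: R'_def)
  ultimately have "r2 0 = 1 + 2 * (nat P - 1)" unfolding r2_def
    by (simp add: card_Un_disjoint card_image)
  then show ?thesis using P_gt_1 by auto
qed

lemma sum_r2: "(\<Sum>t\<in>R. r2 t) = nat P * nat P"
proof -
  define f where "f = (\<lambda>(a::int, b::int). (a^2 + b^2) mod P)"
  have "card (R \<times> R) = card (\<Union>t\<in>R. {x \<in> R \<times> R. f x = t})"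
    using mod_in_R unfolding f_def by (intro arg_cong[where f = card]) auto
  also have "\<dots> = (\<Sum>t\<in>R. card {x \<in> R \<times> R. f x = t})"
    by (rule card_UN_disjoint) (use finite_R in auto)
  also have "\<dots> = (\<Sum>t\<in>R. r2 t)"
    unfolding r2_def f_def by (intro sum.cong refl arg_cong[where f = card]) auto
  finally show ?thesis by (simp add: card_R card_cartesian_product)
qed

lemma card_null_quadruples_sum: "card null_quadruples = (\<Sum>t\<in>R. r2 t * r2 ((- t) mod P))"
proof -
  define f where "f = (\<lambda>(a::int, b::int). (a^2 + b^2) mod P)"
  define B where "B x = {(c, d). c \<in> R \<and> d \<in> R \<and> (c^2 + d^2) mod P = (- f x) mod P}" for x
  have key: "P dvd a^2 + b^2 + c^2 + d^2 \<longleftrightarrow> (c^2 + d^2) mod P = (- ((a^2 + b^2) mod P)) mod P"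
    for a b c d
  proof -
    have "(c^2 + d^2) mod P = (- ((a^2 + b^2) mod P)) mod P \<longleftrightarrow> (c^2 + d^2) mod P = (- (a^2 + b^2)) mod P"
      by (simp add: mod_minus_eq)
    also have "\<dots> \<longleftrightarrow> P dvd (c^2 + d^2) - (- (a^2 + b^2))" by (rule mod_eq_dvd_iff)
    also have "(c^2 + d^2) - (- (a^2 + b^2)) = a^2 + b^2 + c^2 + d^2" by simp
    finally show ?thesis by simp
  qed
  have "null_quadruples = (\<lambda>((a, b), (c, d)). (a, b, c, d)) ` (SIGMA x:R \<times> R. B x)"
  proof (intro equalityI subsetI)
    fix z assume "z \<in> null_quadruples"
    then obtain a b c d where "z = (a, b, c, d)" "(a, b) \<in> R \<times> R" "(c, d) \<in> B (a, b)"
      using key unfolding null_quadruples_def B_def f_def by auto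
    then show "z \<in> (\<lambda>((a, b), (c, d)). (a, b, c, d)) ` (SIGMA x:R \<times> R. B x)"
      by (auto intro!: image_eqI[of _ _ "((a, b), (c, d))"])
  qed (use key in \<open>auto simp: null_quadruples_def B_def f_def\<close>)
  moreover have "inj_on (\<lambda>((a, b), (c, d)). (a::int, b::int, c::int, d::int)) X" for X
    by (auto intro!: inj_onI)
  moreover have "finite (B x)" for x by (rule finite_subset[of _ "R \<times> R"]) (auto simp: B_def finite_R)
  ultimately have "card null_quadruples = card (SIGMA x:R \<times> R. B x)" by (simp add: card_image)
  also have "\<dots> = (\<Sum>x\<in>R \<times> R. card (B x))" using finite_R \<open>\<And>x. finite (B x)\<close> by simp
  also have "\<dots> = (\<Sum>x\<in>R \<times> R. r2 ((- f x) mod P))" unfolding B_def r2_def by simp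
  also have "\<dots> = (\<Sum>t\<in>R. \<Sum>x\<in>{x \<in> R \<times> R. f x = t}. r2 ((- f x) mod P))"
    by (rule sum.group[symmetric]) (use finite_R mod_in_R in \<open>auto simp: f_def\<close>)
  also have "\<dots> = (\<Sum>t\<in>R. card {x \<in> R \<times> R. f x = t} * r2 ((- t) mod P))"
    by (intro sum.cong refl) simp
  also have "\<dots> = (\<Sum>t\<in>R. r2 t * r2 ((- t) mod P))"
    unfolding r2_def f_def by (intro sum.cong refl arg_cong2[where f = "(*)"] arg_cong[where f = card]) auto
  finally show ?thesis .
qed

text \<open>With \<open>K = r2 1\<close>, counting all pairs gives \<open>r2 0 + (P - 1) K = P\<^sup>2\<close>; both possible values
  of \<open>r2 0\<close> then yield the same count.\<close>

lemma card_null_quadruples: "int (card null_quadruples) = P^3 + P^2 - P"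
proof -
  define K where "K = r2 1"
  have np: "int (nat P) = P" "int (nat P - 1) = P - 1" using P_gt_1 by auto
  have R': "finite (R - {0})" "card (R - {0}) = nat P - 1" using finite_R card_R zero_in_R by simp_all
  have "nat P * nat P = r2 0 + (\<Sum>t\<in>R - {0}. r2 t)"
    using sum_r2 sum.remove[OF finite_R zero_in_R, of r2] by simp
  also have "\<dots> = r2 0 + (nat P - 1) * K" using r2_nonzero R' unfolding K_def by simp
  finally have "int (nat P * nat P) = int (r2 0 + (nat P - 1) * K)" by (rule arg_cong)
  then have sum_eq: "int (r2 0) + (P - 1) * int K = P * P" by (simp only: of_nat_add of_nat_mult np)
  have "card null_quadruples = r2 0 * r2 0 + (\<Sum>t\<in>R - {0}. r2 t * r2 ((- t) mod P))"
    using card_null_quadruples_sum sum.remove[OF finite_R zero_in_R, of "\<lambda>t. r2 t * r2 ((- t) mod P)"]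
    by simp
  also have "\<dots> = r2 0 * r2 0 + (nat P - 1) * (K * K)"
    using r2_nonzero mod_in_R not_P_dvd_R R' unfolding K_def by (simp add: dvd_eq_mod_eq_0[symmetric])
  finally have card_eq: "int (card null_quadruples) = int (r2 0) * int (r2 0) + (P - 1) * (int K * int K)"
    by (simp only: of_nat_add of_nat_mult np)
  consider "int (r2 0) = 1" | "int (r2 0) = 2 * P - 1"
    using r2_zero_if_no_sqrt_minus_1 r2_zero_if_sqrt_minus_1 P_gt_1 by force
  then show ?thesis
  proof cases
    case 1
    then have "(P - 1) * int K = (P - 1) * (P + 1)" using sum_eq by (simp add: algebra_simps)
    then have "int K = P + 1" using P_gt_1 by simp
    then show ?thesis using 1 card_eq by (simp add: power2_eq_square power3_eq_cube algebra_simps)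
  next
    case 2
    then have "(P - 1) * int K = (P - 1) * (P - 1)" using sum_eq by (simp add: algebra_simps)
    then have "int K = P - 1" using P_gt_1 by simp
    then have "int (card null_quadruples) = (2 * P - 1) * (2 * P - 1) + (P - 1) * ((P - 1) * (P - 1))"
      using 2 card_eq by (simp only:)
    then show ?thesis by (simp add: power2_eq_square power3_eq_cube algebra_simps)
  qed
qed

end

section \<open>Quaternions with rational coefficients\<close>

datatype quat = Quat (re: rat) (qi: rat) (qj: rat) (qk: rat)

lemma quat_eqI: "re x = re y \<Longrightarrow> qi x = qi y \<Longrightarrow> qj x = qj y \<Longrightarrow> qk x = qk y \<Longrightarrow> x = y"
  by (cases x; cases y) auto

definition qnorm :: "quat \<Rightarrow> rat" where
  "qnorm x = (re x)^2 + (qi x)^2 + (qj x)^2 + (qk x)^2"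

definition qconj :: "quat \<Rightarrow> quat" where
  "qconj x = Quat (re x) (- qi x) (- qj x) (- qk x)"

lemma qnorm_nonneg: "qnorm x \<ge> 0"
  by (simp add: qnorm_def)

lemma qnorm_eq_0_iff: "qnorm x = 0 \<longleftrightarrow> x = Quat 0 0 0 0"
  by (cases x) (simp add: qnorm_def add_nonneg_eq_0_iff)

instantiation quat :: division_ring
begin

definition "0 = Quat 0 0 0 0"
definition "1 = Quat 1 0 0 0"
definition "x + y = Quat (re x + re y) (qi x + qi y) (qj x + qj y) (qk x + qk y)"
definition "x - y = Quat (re x - re y) (qi x - qi y) (qj x - qj y) (qk x - qk y)"
definition "- x = Quat (- re x) (- qi x) (- qj x) (- qk x)"
definition "x * y = Quat (re x * re y - qi x * qi y - qj x * qj y - qk x * qk y)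
                        (re x * qi y + qi x * re y + qj x * qk y - qk x * qj y)
                        (re x * qj y - qi x * qk y + qj x * re y + qk x * qi y)
                        (re x * qk y + qi x * qj y - qj x * qi y + qk x * re y)"
definition "inverse x = Quat (re x / qnorm x) (- qi x / qnorm x) (- qj x / qnorm x) (- qk x / qnorm x)"
definition "x div (y :: quat) = x * inverse y"

instance
proof
  fix x :: quat
  assume "x \<noteq> 0"
  then have "qnorm x \<noteq> 0" by (simp add: qnorm_eq_0_iff zero_quat_def)
  then show "inverse x * x = 1" "x * inverse x = 1"
    by (auto intro!: quat_eqI simp: inverse_quat_def times_quat_def one_quat_def field_simps)
      (simp_all add: qnorm_def power2_eq_square)
qed (auto intro!: quat_eqI simp: zero_quat_def one_quat_def plus_quat_def minus_quat_def
    uminus_quat_def times_quat_def inverse_quat_def divide_quat_def qnorm_def algebra_simps)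

end

lemma quat_simps [simp]:
  "re 0 = 0" "qi 0 = 0" "qj 0 = 0" "qk 0 = 0"
  "re 1 = 1" "qi 1 = 0" "qj 1 = 0" "qk 1 = 0"
  "re (x + y) = re x + re y" "qi (x + y) = qi x + qi y" "qj (x + y) = qj x + qj y" "qk (x + y) = qk x + qk y"
  "re (x - y) = re x - re y" "qi (x - y) = qi x - qi y" "qj (x - y) = qj x - qj y" "qk (x - y) = qk x - qk y"
  "re (- x) = - re x" "qi (- x) = - qi x" "qj (- x) = - qj x" "qk (- x) = - qk x"
  "re (x * y) = re x * re y - qi x * qi y - qj x * qj y - qk x * qk y"
  "qi (x * y) = re x * qi y + qi x * re y + qj x * qk y - qk x * qj y"
  "qj (x * y) = re x * qj y - qi x * qk y + qj x * re y + qk x * qi y"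
  "qk (x * y) = re x * qk y + qi x * qj y - qj x * qi y + qk x * re y"
  by (simp_all add: zero_quat_def one_quat_def plus_quat_def minus_quat_def uminus_quat_def times_quat_def)

lemma qconj_simps [simp]:
  "re (qconj x) = re x" "qi (qconj x) = - qi x" "qj (qconj x) = - qj x" "qk (qconj x) = - qk x"
  by (simp_all add: qconj_def)

lemma of_nat_quat: "(of_nat n :: quat) = Quat (of_nat n) 0 0 0"
  by (induction n) (auto intro!: quat_eqI)

lemma of_int_quat: "(of_int n :: quat) = Quat (of_int n) 0 0 0"
  by (cases n) (auto intro!: quat_eqI simp: of_nat_quat)

lemma mult_qconj: "x * qconj x = Quat (qnorm x) 0 0 0"
  and qconj_mult_self: "qconj x * x = Quat (qnorm x) 0 0 0"
  by (auto intro!: quat_eqI simp: qnorm_def power2_eq_square algebra_simps)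

lemma qconj_mult: "qconj (x * y) = qconj y * qconj x"
  by (rule quat_eqI) (simp_all add: algebra_simps)

lemma qconj_add: "qconj (x + y) = qconj x + qconj y"
  and qconj_qconj [simp]: "qconj (qconj x) = x"
  and qconj_1 [simp]: "qconj 1 = 1"
  and qconj_of_nat [simp]: "qconj (of_nat n) = of_nat n"
  by (auto intro!: quat_eqI simp: of_nat_quat)

lemma qnorm_mult: "qnorm (x * y) = qnorm x * qnorm y"
  by (simp add: qnorm_def power2_eq_square algebra_simps)

lemma qnorm_qconj [simp]: "qnorm (qconj x) = qnorm x"
  and qnorm_0 [simp]: "qnorm 0 = 0"
  and qnorm_1 [simp]: "qnorm 1 = 1"
  and qnorm_of_nat: "qnorm (of_nat n) = of_nat n ^ 2"
  by (simp_all add: qnorm_def of_nat_quat)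

lemma qnorm_eq_0 [simp]: "qnorm x = 0 \<longleftrightarrow> x = 0"
  by (simp add: qnorm_eq_0_iff zero_quat_def)


section \<open>Lipschitz and Hurwitz integers\<close>

definition lipschitz :: "quat \<Rightarrow> bool" where
  "lipschitz q \<longleftrightarrow> re q \<in> \<int> \<and> qi q \<in> \<int> \<and> qj q \<in> \<int> \<and> qk q \<in> \<int>"

definition omega :: quat where "omega = Quat (1/2) (1/2) (1/2) (1/2)"

definition hurwitz :: "quat \<Rightarrow> bool" where
  "hurwitz q \<longleftrightarrow> lipschitz q \<or> lipschitz (q - omega)"

lemma omega_simps [simp]: "re omega = 1/2" "qi omega = 1/2" "qj omega = 1/2" "qk omega = 1/2"
  by (simp_all add: omega_def)

lemma lipschitz_add: "lipschitz x \<Longrightarrow> lipschitz y \<Longrightarrow> lipschitz (x + y)"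
  and lipschitz_diff: "lipschitz x \<Longrightarrow> lipschitz y \<Longrightarrow> lipschitz (x - y)"
  and lipschitz_uminus: "lipschitz x \<Longrightarrow> lipschitz (- x)"
  and lipschitz_mult: "lipschitz x \<Longrightarrow> lipschitz y \<Longrightarrow> lipschitz (x * y)"
  and lipschitz_0 [simp]: "lipschitz 0"
  and lipschitz_1 [simp]: "lipschitz 1"
  and lipschitz_qconj: "lipschitz x \<Longrightarrow> lipschitz (qconj x)"
  and lipschitz_of_int: "lipschitz (of_int n)"
  and lipschitz_double_omega: "lipschitz (omega + omega)"
  by (auto simp: lipschitz_def of_int_quat)

lemma lipschitz_imp_hurwitz: "lipschitz x \<Longrightarrow> hurwitz x"
  by (simp add: hurwitz_def)

lemma lipschitz_obtain:
  assumes "lipschitz x"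
  obtains a b c d where "re x = of_int a" "qi x = of_int b" "qj x = of_int c" "qk x = of_int d"
  using assms unfolding lipschitz_def by (auto elim!: Ints_cases)

lemma half_of_int_cases:
  fixes x :: rat
  assumes "x = of_int s / 2"
  shows "(even s \<longrightarrow> x \<in> \<int>) \<and> (odd s \<longrightarrow> x - 1/2 \<in> \<int>)"
proof (intro conjI impI)
  assume "even s"
  then show "x \<in> \<int>" using assms by (auto elim!: evenE)
next
  assume "odd s"
  then obtain k where "s = 2 * k + 1" by (rule oddE)
  then have "x - 1/2 = of_int k" using assms by (simp add: field_simps)
  then show "x - 1/2 \<in> \<int>" by simp
qed

lemma hurwitz_of_halves:
  assumes "re z = of_int s1 / 2" "qi z = of_int s2 / 2" "qj z = of_int s3 / 2" "qk z = of_int s4 / 2"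
    and "even (s1 - s2)" "even (s1 - s3)" "even (s1 - s4)"
  shows "hurwitz z"
proof (cases "even s1")
  case True
  then have "even s2" "even s3" "even s4" using assms(5-7) by presburger+
  then show ?thesis unfolding hurwitz_def lipschitz_def
    using half_of_int_cases[OF assms(1)] half_of_int_cases[OF assms(2)]
      half_of_int_cases[OF assms(3)] half_of_int_cases[OF assms(4)] True by blast
next
  case False
  then have "odd s2" "odd s3" "odd s4" using assms(5-7) by presburger+
  then show ?thesis unfolding hurwitz_def lipschitz_def
    using half_of_int_cases[OF assms(1)] half_of_int_cases[OF assms(2)]
      half_of_int_cases[OF assms(3)] half_of_int_cases[OF assms(4)] False by simp
qed

lemma lipschitz_mult_omega:
  assumes "lipschitz l"
  shows "hurwitz (l * omega)" "hurwitz (omega * l)"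
proof -
  obtain a b c d where l: "re l = of_int a" "qi l = of_int b" "qj l = of_int c" "qk l = of_int d"
    using assms by (rule lipschitz_obtain)
  have "re (l * omega) = of_int (a - b - c - d) / 2" "qi (l * omega) = of_int (a + b + c - d) / 2"
    "qj (l * omega) = of_int (a - b + c + d) / 2" "qk (l * omega) = of_int (a + b - c + d) / 2"
    by (simp_all add: l field_simps)
  then show "hurwitz (l * omega)" by (rule hurwitz_of_halves) presburger+
  have "re (omega * l) = of_int (a - b - c - d) / 2" "qi (omega * l) = of_int (a + b - c + d) / 2"
    "qj (omega * l) = of_int (a + b + c - d) / 2" "qk (omega * l) = of_int (a - b + c + d) / 2"
    by (simp_all add: l field_simps)
  then show "hurwitz (omega * l)" by (rule hurwitz_of_halves) presburger+
qed

lemma hurwitz_add: "hurwitz x \<Longrightarrow> hurwitz y \<Longrightarrow> hurwitz (x + y)"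
proof -
  assume "hurwitz x" "hurwitz y"
  have "x + y = (x - omega) + (y - omega) + (omega + omega)" "x + y - omega = x + (y - omega)"
    "x + y - omega = (x - omega) + y" by (simp_all add: algebra_simps)
  then show ?thesis using \<open>hurwitz x\<close> \<open>hurwitz y\<close> lipschitz_add lipschitz_double_omega
    unfolding hurwitz_def by metis
qed

lemma hurwitz_uminus: "hurwitz x \<Longrightarrow> hurwitz (- x)"
proof -
  assume "hurwitz x"
  have "- x - omega = - (x - omega) - (omega + omega)" by (simp add: algebra_simps)
  then show ?thesis using \<open>hurwitz x\<close> lipschitz_uminus lipschitz_diff lipschitz_double_omega
    unfolding hurwitz_def by metis
qed

lemma hurwitz_diff: "hurwitz x \<Longrightarrow> hurwitz y \<Longrightarrow> hurwitz (x - y)"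
  using hurwitz_add[of x "- y"] hurwitz_uminus by simp

lemma hurwitz_0 [simp]: "hurwitz 0"
  and hurwitz_1 [simp]: "hurwitz 1"
  and hurwitz_omega [simp]: "hurwitz omega"
  and hurwitz_of_int [simp]: "hurwitz (of_int n)"
  and hurwitz_of_nat [simp]: "hurwitz (of_nat m)"
  using lipschitz_of_int[of "int m"] by (simp_all add: hurwitz_def lipschitz_of_int)

lemma hurwitz_cases:
  assumes "hurwitz x"
  obtains l where "lipschitz l" "x = l \<or> x = l + omega"
  using assms unfolding hurwitz_def by (metis diff_add_cancel)

lemma hurwitz_mult: "hurwitz x \<Longrightarrow> hurwitz y \<Longrightarrow> hurwitz (x * y)"
proof -
  assume "hurwitz x" "hurwitz y"
  then obtain l1 l2 where l: "lipschitz l1" "lipschitz l2" "x = l1 \<or> x = l1 + omega" "y = l2 \<or> y = l2 + omega"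
    by (metis hurwitz_cases)
  have "hurwitz (l1 * l2)" using l lipschitz_mult lipschitz_imp_hurwitz by blast
  moreover have "hurwitz (l1 * omega)" "hurwitz (omega * l2)" using lipschitz_mult_omega l by auto
  moreover have "omega * omega = omega - 1" by (rule quat_eqI) simp_all
  then have "hurwitz (omega * omega)" by (simp add: hurwitz_diff)
  ultimately show ?thesis using l(3,4) by (auto simp: algebra_simps intro!: hurwitz_add)
qed

lemma hurwitz_qconj: "hurwitz x \<Longrightarrow> hurwitz (qconj x)"
proof -
  assume "hurwitz x"
  then obtain l where l: "lipschitz l" "x = l \<or> x = l + omega" by (rule hurwitz_cases)
  have "qconj omega = omega - Quat 0 1 1 1" by (rule quat_eqI) simp_all
  moreover have "lipschitz (Quat 0 1 1 1)" by (simp add: lipschitz_def)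
  ultimately have "hurwitz (qconj omega)" by (simp add: hurwitz_diff lipschitz_imp_hurwitz)
  then show ?thesis using l by (metis qconj_add hurwitz_add lipschitz_imp_hurwitz lipschitz_qconj)
qed

lemma hurwitz_twice_Ints:
  assumes "hurwitz q"
  shows "2 * re q \<in> \<int>" "2 * qi q \<in> \<int>" "2 * qj q \<in> \<int>" "2 * qk q \<in> \<int>"
proof -
  have "2 * x \<in> \<int>" if "x \<in> \<int> \<or> x - 1/2 \<in> \<int>" for x :: rat
    using that
  proof (elim disjE Ints_cases)
    fix k assume "x - 1/2 = of_int k"
    then have "2 * x = of_int (2 * k + 1)" by (simp add: field_simps)
    then show ?thesis by (metis Ints_of_int)
  qed simp
  then show "2 * re q \<in> \<int>" "2 * qi q \<in> \<int>" "2 * qj q \<in> \<int>" "2 * qk q \<in> \<int>"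
    using assms unfolding hurwitz_def lipschitz_def by auto
qed

lemma qnorm_hurwitz_Ints:
  assumes "hurwitz x"
  shows "qnorm x \<in> \<int>"
proof -
  obtain l where l: "lipschitz l" "x = l \<or> x = l + omega" using assms by (rule hurwitz_cases)
  obtain a b c d where abcd: "re l = of_int a" "qi l = of_int b" "qj l = of_int c" "qk l = of_int d"
    using l(1) by (rule lipschitz_obtain)
  have "qnorm l = of_int (a^2 + b^2 + c^2 + d^2)"
    "qnorm (l + omega) = of_int (a^2 + b^2 + c^2 + d^2 + a + b + c + d + 1)"
    by (simp_all add: qnorm_def abcd power2_eq_square field_simps)
  then show ?thesis using l(2) by auto
qed

definition inorm :: "quat \<Rightarrow> int" where "inorm x = \<lfloor>qnorm x\<rfloor>"

lemma of_int_inorm: "hurwitz x \<Longrightarrow> of_int (inorm x) = qnorm x"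
  using qnorm_hurwitz_Ints unfolding inorm_def by (metis floor_of_int Ints_cases)

lemma inorm_nonneg: "inorm x \<ge> 0"
  unfolding inorm_def using qnorm_nonneg by simp

lemma inorm_mult: "hurwitz x \<Longrightarrow> hurwitz y \<Longrightarrow> inorm (x * y) = inorm x * inorm y"
  by (metis hurwitz_mult of_int_inorm qnorm_mult of_int_eq_iff of_int_mult)

lemma inorm_of_nat: "inorm (of_nat n) = int n ^ 2"
  using of_int_inorm[OF hurwitz_of_nat[of n]] qnorm_of_nat[of n]
  by (metis of_int_eq_iff of_int_of_nat_eq of_int_power)

lemma inorm_eq_iff: "hurwitz x \<Longrightarrow> inorm x = k \<longleftrightarrow> qnorm x = of_int k"
  by (metis of_int_inorm of_int_eq_iff)

lemma hurwitz_mult_qconj: "hurwitz x \<Longrightarrow> x * qconj x = of_int (inorm x)"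
  by (simp add: mult_qconj of_int_inorm of_int_quat)


section \<open>Division with remainder and right greatest common divisors\<close>

lemma sq_le_quarter: "\<bar>y\<bar> \<le> 1/2 \<Longrightarrow> y^2 \<le> (1/4 :: rat)"
  using power_mono[of "\<bar>y\<bar>" "1/2" 2] by (simp add: power2_eq_square)

lemma half_Ints_if_sq_ge_quarter:
  fixes y :: rat
  assumes "\<bar>y\<bar> \<le> 1/2" "y^2 \<ge> 1/4"
  shows "y - 1/2 \<in> \<int>"
proof -
  have "\<bar>y\<bar>^2 \<ge> (1/2)^2" using assms by (simp add: power2_eq_square)
  then have "\<bar>y\<bar> = 1/2" using assms(1) power2_le_imp_le[of "1/2" "\<bar>y\<bar>"] by simp
  then have "y - 1/2 = 0 \<or> y - 1/2 = -1" by auto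
  then show ?thesis by (metis Ints_0 Ints_1 Ints_minus)
qed

text \<open>If the error still has norm at least \<open>1\<close>,
  every coordinate of the error is \<open>\<plusminus>1/2\<close>, so \<open>x\<close> is itself a Hurwitz integer.\<close>

lemma hurwitz_approx: "\<exists>q. hurwitz q \<and> qnorm (x - q) < 1"
proof -
  define L where "L = Quat (of_int (round (re x))) (of_int (round (qi x)))
    (of_int (round (qj x))) (of_int (round (qk x)))"
  have "lipschitz L" by (simp add: L_def lipschitz_def)
  define d where "d = x - L"
  have d: "\<bar>re d\<bar> \<le> 1/2" "\<bar>qi d\<bar> \<le> 1/2" "\<bar>qj d\<bar> \<le> 1/2" "\<bar>qk d\<bar> \<le> 1/2"
    using of_int_round_abs_le[of "re x"] of_int_round_abs_le[of "qi x"] of_int_round_abs_le[of "qj x"]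
      of_int_round_abs_le[of "qk x"] by (simp_all add: d_def L_def abs_minus_commute)
  show ?thesis
  proof (cases "qnorm d < 1")
    case True
    then show ?thesis using \<open>lipschitz L\<close> lipschitz_imp_hurwitz d_def by blast
  next
    case False
    then have "(re d)^2 + (qi d)^2 + (qj d)^2 + (qk d)^2 \<ge> 1" by (simp add: qnorm_def)
    moreover have "(re d)^2 \<le> 1/4" "(qi d)^2 \<le> 1/4" "(qj d)^2 \<le> 1/4" "(qk d)^2 \<le> 1/4"
      using sq_le_quarter d by auto
    ultimately have "(re d)^2 \<ge> 1/4" "(qi d)^2 \<ge> 1/4" "(qj d)^2 \<ge> 1/4" "(qk d)^2 \<ge> 1/4"
      by linarith+
    then have "lipschitz (d - omega)" using half_Ints_if_sq_ge_quarter d by (simp add: lipschitz_def)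
    then have "hurwitz (d + L)"
      using \<open>lipschitz L\<close> hurwitz_add lipschitz_imp_hurwitz unfolding hurwitz_def by blast
    then show ?thesis by (intro exI[of _ x]) (simp add: d_def)
  qed
qed

lemma hurwitz_division:
  assumes "hurwitz a" "b \<noteq> 0"
  shows "\<exists>q. hurwitz q \<and> qnorm (a - q * b) < qnorm b"
proof -
  obtain q where q: "hurwitz q" "qnorm (a * inverse b - q) < 1" using hurwitz_approx by blast
  have "a - q * b = (a * inverse b - q) * b" using assms(2) by (simp add: algebra_simps mult.assoc)
  then have "qnorm (a - q * b) = qnorm (a * inverse b - q) * qnorm b" by (simp add: qnorm_mult)
  also have "\<dots> < 1 * qnorm b"
    using q(2) assms(2) qnorm_nonneg[of b] by (intro mult_strict_right_mono) (auto simp: order_less_le)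
  finally show ?thesis using q(1) by auto
qed

definition right_dvd :: "quat \<Rightarrow> quat \<Rightarrow> bool" where
  "right_dvd g a \<longleftrightarrow> (\<exists>s. hurwitz s \<and> a = s * g)"

text \<open>A nonzero element of minimal norm in the left ideal generated by \<open>a\<close> and \<open>b\<close> right-divides
  every element of that ideal: otherwise the remainder of the division would be smaller.\<close>

lemma min_norm_right_dvd:
  assumes ab: "hurwitz a" "hurwitz b"
    and g: "g = u * a + v * b" "hurwitz u" "hurwitz v" "g \<noteq> 0"
    and min: "\<And>u' v'. hurwitz u' \<Longrightarrow> hurwitz v' \<Longrightarrow> u' * a + v' * b \<noteq> 0 \<Longrightarrow>
      qnorm g \<le> qnorm (u' * a + v' * b)"
    and c: "c = u' * a + v' * b" "hurwitz u'" "hurwitz v'"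
  shows "right_dvd g c"
proof -
  have "hurwitz c" using c ab by (simp add: hurwitz_add hurwitz_mult)
  then obtain q where q: "hurwitz q" "qnorm (c - q * g) < qnorm g"
    using hurwitz_division g(4) by blast
  have "c - q * g = (u' - q * u) * a + (v' - q * v) * b" using c g(1) by (simp add: algebra_simps)
  moreover have "hurwitz (u' - q * u)" "hurwitz (v' - q * v)"
    using c q(1) g(2,3) by (simp_all add: hurwitz_diff hurwitz_mult)
  ultimately have "c - q * g = 0" using min q(2) by fastforce
  then show ?thesis unfolding right_dvd_def using q(1) by (intro exI[of _ q]) simp
qed

lemma hurwitz_right_gcd:
  assumes "hurwitz a" "hurwitz b"
  shows "\<exists>g u v. hurwitz g \<and> right_dvd g a \<and> right_dvd g b \<and> hurwitz u \<and> hurwitz v \<and> g = u * a + v * b"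
proof (cases "a = 0 \<and> b = 0")
  case True
  then show ?thesis by (intro exI[of _ 0] exI[of _ 0] exI[of _ 0]) (auto simp: right_dvd_def intro: hurwitz_0)
next
  case False
  define P where "P n \<longleftrightarrow> (\<exists>u v. hurwitz u \<and> hurwitz v \<and> u * a + v * b \<noteq> 0 \<and> inorm (u * a + v * b) = int n)"
    for n
  have "P (nat (inorm a)) \<or> P (nat (inorm b))"
    using False inorm_nonneg unfolding P_def by (metis add_0 add_0_right hurwitz_0 hurwitz_1 mult_1 mult_zero_left int_nat_eq)
  then obtain n where n: "P n" "\<And>m. m < n \<Longrightarrow> \<not> P m" using exists_least_iff[of P] by blast
  then obtain u v where uv: "hurwitz u" "hurwitz v" "u * a + v * b \<noteq> 0" "inorm (u * a + v * b) = int n"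
    unfolding P_def by blast
  define g where "g = u * a + v * b"
  have norm_le: "qnorm g \<le> qnorm (u' * a + v' * b)"
    if "hurwitz u'" "hurwitz v'" "u' * a + v' * b \<noteq> 0" for u' v'
  proof -
    have "P (nat (inorm (u' * a + v' * b)))" using that inorm_nonneg unfolding P_def by auto
    then have "\<not> nat (inorm (u' * a + v' * b)) < n" using n(2) by blast
    then have "inorm g \<le> inorm (u' * a + v' * b)"
      using uv(4) inorm_nonneg[of "u' * a + v' * b"] unfolding g_def by (simp add: not_less le_nat_iff)
    then show ?thesis using of_int_inorm[of g] of_int_inorm[of "u' * a + v' * b"] that uv assms
      unfolding g_def by (metis hurwitz_add hurwitz_mult of_int_le_iff)
  qed
  have "a = 1 * a + 0 * b" "b = 0 * a + 1 * b" by simp_all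
  then have "right_dvd g a" "right_dvd g b"
    using min_norm_right_dvd[OF assms g_def uv(1,2) _ norm_le] uv(3) unfolding g_def by (metis hurwitz_0 hurwitz_1)+
  then show ?thesis using uv assms unfolding g_def by (blast intro: hurwitz_add hurwitz_mult)
qed

section \<open>Hurwitz integers of a given norm\<close>

definition hurwitz_of_norm :: "nat \<Rightarrow> quat set" where
  "hurwitz_of_norm n = {q. hurwitz q \<and> qnorm q = of_nat n}"

definition nat_dvd :: "nat \<Rightarrow> quat \<Rightarrow> bool" where
  "nat_dvd n r \<longleftrightarrow> (\<exists>s. hurwitz s \<and> r = of_nat n * s)"

lemma hurwitz_of_norm_hurwitz: "q \<in> hurwitz_of_norm n \<Longrightarrow> hurwitz q"
  by (simp add: hurwitz_of_norm_def)

lemma inorm_hurwitz_of_norm: "q \<in> hurwitz_of_norm n \<Longrightarrow> inorm q = int n"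
  by (simp add: hurwitz_of_norm_def inorm_eq_iff)

lemma hurwitz_of_norm_iff_inorm: "q \<in> hurwitz_of_norm n \<longleftrightarrow> hurwitz q \<and> inorm q = int n"
  by (auto simp: hurwitz_of_norm_def inorm_eq_iff)

lemma qconj_hurwitz_of_norm: "q \<in> hurwitz_of_norm n \<Longrightarrow> qconj q \<in> hurwitz_of_norm n"
  by (simp add: hurwitz_of_norm_def hurwitz_qconj)

lemma hurwitz_of_norm_mult_qconj:
  assumes "q \<in> hurwitz_of_norm n"
  shows "q * qconj q = of_nat n" "qconj q * q = of_nat n"
  using assms by (simp_all add: hurwitz_of_norm_def mult_qconj qconj_mult_self of_nat_quat)

lemma hurwitz_of_norm_mult: "a \<in> hurwitz_of_norm m \<Longrightarrow> b \<in> hurwitz_of_norm n \<Longrightarrow> a * b \<in> hurwitz_of_norm (m * n)"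
  by (simp add: hurwitz_of_norm_def hurwitz_mult qnorm_mult)

lemma hurwitz_of_norm_nonzero: "a \<in> hurwitz_of_norm m \<Longrightarrow> m > 0 \<Longrightarrow> a \<noteq> 0"
  by (auto simp: hurwitz_of_norm_def)

lemma one_in_hurwitz_of_norm_1: "1 \<in> hurwitz_of_norm 1"
  by (simp add: hurwitz_of_norm_def)

lemma abs_le_of_sq_le: fixes x :: rat assumes "x^2 \<le> of_nat n" shows "\<bar>x\<bar> \<le> of_nat n"
proof (rule ccontr)
  assume "\<not> ?thesis"
  then have a: "\<bar>x\<bar> > of_nat n" by simp
  then have "\<bar>x\<bar> > 1" using assms by (cases "n = 0") auto
  then have "\<bar>x\<bar> * \<bar>x\<bar> > \<bar>x\<bar> * 1" by (intro mult_strict_left_mono) auto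
  then show False using a assms by (simp add: power2_eq_square)
qed

lemma finite_hurwitz_of_norm: "finite (hurwitz_of_norm n)"
proof -
  define f where "f = (\<lambda>(a::int, b::int, c::int, d::int). Quat (of_int a / 2) (of_int b / 2) (of_int c / 2) (of_int d / 2))"
  define B where "B = {-2 * int n..2 * int n}"
  have "hurwitz_of_norm n \<subseteq> f ` (B \<times> B \<times> B \<times> B)"
  proof
    fix q assume q: "q \<in> hurwitz_of_norm n"
    have "(re q)^2 \<le> qnorm q" "(qi q)^2 \<le> qnorm q" "(qj q)^2 \<le> qnorm q" "(qk q)^2 \<le> qnorm q"
      unfolding qnorm_def by (simp_all add: add_nonneg_nonneg)
    then have "(re q)^2 \<le> of_nat n" "(qi q)^2 \<le> of_nat n" "(qj q)^2 \<le> of_nat n" "(qk q)^2 \<le> of_nat n"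
      using q unfolding hurwitz_of_norm_def by auto
    then have bd: "\<bar>re q\<bar> \<le> of_nat n" "\<bar>qi q\<bar> \<le> of_nat n" "\<bar>qj q\<bar> \<le> of_nat n" "\<bar>qk q\<bar> \<le> of_nat n"
      by (auto intro: abs_le_of_sq_le)
    obtain a b c d where abcd: "2 * re q = of_int a" "2 * qi q = of_int b" "2 * qj q = of_int c" "2 * qk q = of_int d"
      using hurwitz_twice_Ints[OF hurwitz_of_norm_hurwitz[OF q]] by (auto elim!: Ints_cases)
    have "k \<in> B" if "of_int k = 2 * y" "\<bar>y\<bar> \<le> of_nat n" for k and y :: rat
    proof -
      have "(of_int \<bar>k\<bar> :: rat) \<le> of_int (2 * int n)" using that by simp
      then show ?thesis unfolding B_def by (simp only: of_int_le_iff) auto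
    qed
    then have "(a, b, c, d) \<in> B \<times> B \<times> B \<times> B" using abcd bd by (metis SigmaI)
    moreover have "q = f (a, b, c, d)" unfolding f_def using abcd by (auto intro!: quat_eqI)
    ultimately show "q \<in> f ` (B \<times> B \<times> B \<times> B)" by blast
  qed
  then show ?thesis by (rule finite_subset) (simp add: B_def)
qed


section \<open>Right divisors of prime norm\<close>

lemma nat_dvd_qconj: "nat_dvd p (qconj r) \<Longrightarrow> nat_dvd p r"
  unfolding nat_dvd_def by (metis qconj_qconj qconj_mult qconj_of_nat mult_of_nat_commute hurwitz_qconj)

lemma nat_dvd_right_mult: "nat_dvd p r \<Longrightarrow> hurwitz s \<Longrightarrow> nat_dvd p (r * s)"
  unfolding nat_dvd_def by (metis hurwitz_mult mult.assoc)

lemma int_eq_prime_power_if_dvd: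
  assumes "prime p" "a \<ge> 0" "b \<ge> 0" "a * b = int p ^ k"
  shows "\<exists>i\<le>k. a = int p ^ i"
proof -
  have "nat a dvd p ^ k" using assms
    by (metis dvd_triv_left nat_int nat_mult_distrib nat_power_eq of_nat_0_le_iff)
  then obtain i where "i \<le> k" "nat a = p ^ i" using divides_primepow_nat[OF assms(1)] by blast
  moreover have "a = int (nat a)" using assms(2) by simp
  ultimately show ?thesis by (intro exI[of _ i]) (simp add: of_nat_power)
qed

text \<open>A left Bezout relation \<open>1 = u r + v p\<close> with \<open>p\<close> dividing the norm of \<open>r\<close> forces \<open>p\<close> to divide
  \<open>r\<close>: multiply by \<open>qconj r\<close> on the right.\<close>

lemma nat_dvd_if_left_bezout:
  assumes "hurwitz r" "hurwitz u" "hurwitz v" "1 = u * r + v * of_nat p" "int p dvd inorm r"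
  shows "nat_dvd p r"
proof -
  obtain k where k: "inorm r = int p * k" using assms(5) by blast
  have "qconj r = (u * r + v * of_nat p) * qconj r" using assms(4) by simp
  also have "\<dots> = u * (r * qconj r) + v * of_nat p * qconj r" by (simp add: algebra_simps mult.assoc)
  also have "r * qconj r = of_nat p * of_int k" using hurwitz_mult_qconj[OF assms(1)] k by simp
  finally have "qconj r = of_nat p * (u * of_int k + v * qconj r)"
    by (simp add: algebra_simps mult.assoc mult_of_nat_commute)
  moreover have "hurwitz (u * of_int k + v * qconj r)"
    using assms by (simp add: hurwitz_add hurwitz_mult hurwitz_qconj)
  ultimately show ?thesis using nat_dvd_qconj unfolding nat_dvd_def by blast
qed

text \<open>The right gcd of \<open>r\<close> and \<open>p\<close> has norm dividing \<open>p\<^sup>2\<close>; norm \<open>1\<close> or \<open>p\<^sup>2\<close> would force \<open>p\<close> to divide \<open>r\<close>.\<close>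

lemma exists_prime_norm_right_dvd:
  assumes p: "prime p" and r: "hurwitz r" "int p dvd inorm r" "\<not> nat_dvd p r"
  shows "\<exists>\<pi>\<in>hurwitz_of_norm p. right_dvd \<pi> r"
proof -
  obtain g u v where g: "hurwitz g" "right_dvd g r" "right_dvd g (of_nat p)" "hurwitz u" "hurwitz v"
    "g = u * r + v * of_nat p"
    using hurwitz_right_gcd[OF r(1) hurwitz_of_nat] by blast
  obtain h where h: "hurwitz h" "of_nat p = h * g" using g(3) unfolding right_dvd_def by blast
  have norms: "inorm h * inorm g = int p ^ 2" using inorm_mult[OF h(1) g(1)] h(2) inorm_of_nat by metis
  then obtain i where i: "i \<le> 2" "inorm g = int p ^ i"
    using int_eq_prime_power_if_dvd[OF p inorm_nonneg inorm_nonneg] by (metis mult.commute)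
  have "i \<noteq> 0"
  proof
    assume "i = 0"
    then have "g \<in> hurwitz_of_norm 1" using i g(1) by (simp add: hurwitz_of_norm_iff_inorm)
    then have "1 = (qconj g * u) * r + (qconj g * v) * of_nat p"
      using hurwitz_of_norm_mult_qconj(2)[of g 1] g(6) by (simp add: algebra_simps mult.assoc)
    then show False using nat_dvd_if_left_bezout r g by (meson hurwitz_mult hurwitz_qconj)
  qed
  moreover have "i \<noteq> 2"
  proof
    assume "i = 2"
    then have "h \<in> hurwitz_of_norm 1"
      using norms i h(1) prime_gt_1_nat[OF p] by (simp add: hurwitz_of_norm_iff_inorm)
    then have "g = qconj h * of_nat p"
      using h(2) hurwitz_of_norm_mult_qconj(2)[of h 1] by (simp add: mult.assoc[symmetric])
    moreover obtain s where "hurwitz s" "r = s * g" using g(2) unfolding right_dvd_def by blast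
    ultimately have "r = s * qconj h * of_nat p" by (simp add: mult.assoc)
    also have "\<dots> = of_nat p * (s * qconj h)" by (rule mult_of_nat_commute[symmetric])
    finally show False
      using r(3) \<open>hurwitz s\<close> h(1) hurwitz_mult hurwitz_qconj unfolding nat_dvd_def by blast
  qed
  ultimately have "i = 1" using i(1) by linarith
  then have "g \<in> hurwitz_of_norm p" using i g(1) by (simp add: hurwitz_of_norm_iff_inorm)
  then show ?thesis using g(2) by blast
qed

text \<open>Two right divisors of norm \<open>p\<close> of \<open>r\<close> have a right gcd of norm \<open>1\<close> or \<open>p\<close>. In the first case
  \<open>1 = qconj \<pi>\<^sub>1 x + qconj \<pi>\<^sub>2 y\<close>, and multiplying by \<open>r\<close> on the left shows that \<open>p\<close> divides \<open>r\<close>.\<close>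

lemma prime_norm_right_dvd_unique:
  assumes p: "prime p" and r: "\<not> nat_dvd p r"
    and \<pi>: "\<pi>1 \<in> hurwitz_of_norm p" "\<pi>2 \<in> hurwitz_of_norm p" "right_dvd \<pi>1 r" "right_dvd \<pi>2 r"
  shows "\<exists>u\<in>hurwitz_of_norm 1. \<pi>2 = u * \<pi>1"
proof -
  have h: "hurwitz \<pi>1" "hurwitz \<pi>2" using \<pi> hurwitz_of_norm_hurwitz by auto
  obtain g x y where g: "hurwitz g" "right_dvd g \<pi>1" "right_dvd g \<pi>2" "hurwitz x" "hurwitz y"
    "g = x * \<pi>1 + y * \<pi>2"
    using hurwitz_right_gcd[OF h] by blast
  obtain a1 a2 where a: "hurwitz a1" "\<pi>1 = a1 * g" "hurwitz a2" "\<pi>2 = a2 * g"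
    using g(2,3) unfolding right_dvd_def by blast
  have e: "inorm a1 * inorm g = int p ^ 1" "inorm a2 * inorm g = int p"
    using inorm_mult[OF a(1) g(1)] inorm_mult[OF a(3) g(1)] a(2,4)
      inorm_hurwitz_of_norm[OF \<pi>(1)] inorm_hurwitz_of_norm[OF \<pi>(2)] by simp_all
  then obtain i where i: "i \<le> 1" "inorm g = int p ^ i"
    using int_eq_prime_power_if_dvd[OF p inorm_nonneg inorm_nonneg] by (metis mult.commute)
  show ?thesis
  proof (cases "i = 1")
    case True
    then have "a1 \<in> hurwitz_of_norm 1" "a2 \<in> hurwitz_of_norm 1"
      using e i a prime_gt_1_nat[OF p] by (simp_all add: hurwitz_of_norm_iff_inorm)
    then have "a2 * qconj a1 \<in> hurwitz_of_norm 1"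
      using hurwitz_of_norm_mult[of a2 1 "qconj a1" 1] qconj_hurwitz_of_norm by simp
    moreover have "g = qconj a1 * \<pi>1"
      using a(2) hurwitz_of_norm_mult_qconj(2)[OF \<open>a1 \<in> hurwitz_of_norm 1\<close>] by (simp add: mult.assoc[symmetric])
    then have "\<pi>2 = (a2 * qconj a1) * \<pi>1" using a(4) by (simp add: mult.assoc)
    ultimately show ?thesis by blast
  next
    case False
    then have "i = 0" using i(1) by linarith
    then have "g \<in> hurwitz_of_norm 1" using i g(1) by (simp add: hurwitz_of_norm_iff_inorm)
    then have "1 = qconj g * g" using hurwitz_of_norm_mult_qconj(2)[of g 1] by simp
    also have "\<dots> = (qconj g * x) * \<pi>1 + (qconj g * y) * \<pi>2"
      unfolding g(6) by (simp add: distrib_left mult.assoc)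
    finally have "qconj 1 = qconj ((qconj g * x) * \<pi>1 + (qconj g * y) * \<pi>2)" by (rule arg_cong)
    then have one: "1 = qconj \<pi>1 * qconj (qconj g * x) + qconj \<pi>2 * qconj (qconj g * y)"
      by (simp only: qconj_1 qconj_add qconj_mult)
    obtain s1 s2 where s: "hurwitz s1" "r = s1 * \<pi>1" "hurwitz s2" "r = s2 * \<pi>2"
      using \<pi>(3,4) unfolding right_dvd_def by blast
    have "r = r * qconj \<pi>1 * qconj (qconj g * x) + r * qconj \<pi>2 * qconj (qconj g * y)"
      by (subst (1) mult_1_right[symmetric], subst one) (simp add: algebra_simps mult.assoc)
    also have "r * qconj \<pi>1 = s1 * of_nat p"
      using s(2) hurwitz_of_norm_mult_qconj(1)[OF \<pi>(1)] by (simp add: mult.assoc)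
    also have "r * qconj \<pi>2 = s2 * of_nat p"
      using s(4) hurwitz_of_norm_mult_qconj(1)[OF \<pi>(2)] by (simp add: mult.assoc)
    finally have "r = of_nat p * (s1 * qconj (qconj g * x) + s2 * qconj (qconj g * y))"
      by (simp add: algebra_simps mult_of_nat_commute mult.assoc)
    moreover have "hurwitz (s1 * qconj (qconj g * x) + s2 * qconj (qconj g * y))"
      using s g by (simp add: hurwitz_add hurwitz_mult hurwitz_qconj)
    ultimately show ?thesis using r unfolding nat_dvd_def by blast
  qed
qed

lemma card_prime_norm_right_dvd:
  assumes p: "prime p" and r: "hurwitz r" "int p dvd inorm r"
  shows "card {\<pi> \<in> hurwitz_of_norm p. right_dvd \<pi> r} =
    (if nat_dvd p r then card (hurwitz_of_norm p) else card (hurwitz_of_norm 1))"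
proof (cases "nat_dvd p r")
  case True
  then obtain s where s: "hurwitz s" "r = of_nat p * s" unfolding nat_dvd_def by blast
  have "right_dvd \<pi> r" if "\<pi> \<in> hurwitz_of_norm p" for \<pi>
  proof -
    have "r = s * of_nat p" using s(2) by (simp add: mult_of_nat_commute[of p s])
    also have "\<dots> = (s * qconj \<pi>) * \<pi>" using hurwitz_of_norm_mult_qconj(2)[OF that] by (simp add: mult.assoc)
    finally have "r = (s * qconj \<pi>) * \<pi>" .
    moreover have "hurwitz (s * qconj \<pi>)"
      using s(1) hurwitz_of_norm_hurwitz[OF that] by (simp add: hurwitz_mult hurwitz_qconj)
    ultimately show ?thesis unfolding right_dvd_def by blast
  qed
  then have "{\<pi> \<in> hurwitz_of_norm p. right_dvd \<pi> r} = hurwitz_of_norm p" by blast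
  then show ?thesis using True by simp
next
  case False
  obtain \<pi>0 where \<pi>0: "\<pi>0 \<in> hurwitz_of_norm p" "right_dvd \<pi>0 r"
    using exists_prime_norm_right_dvd[OF p r False] by blast
  then obtain s where s: "hurwitz s" "r = s * \<pi>0" unfolding right_dvd_def by blast
  have "{\<pi> \<in> hurwitz_of_norm p. right_dvd \<pi> r} = (\<lambda>u. u * \<pi>0) ` hurwitz_of_norm 1"
  proof (intro equalityI subsetI)
    fix \<pi> assume "\<pi> \<in> {\<pi> \<in> hurwitz_of_norm p. right_dvd \<pi> r}"
    then show "\<pi> \<in> (\<lambda>u. u * \<pi>0) ` hurwitz_of_norm 1"
      using prime_norm_right_dvd_unique[OF p False \<pi>0(1) _ \<pi>0(2)] by blast
  next
    fix \<pi> assume "\<pi> \<in> (\<lambda>u. u * \<pi>0) ` hurwitz_of_norm 1"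
    then obtain u where u: "u \<in> hurwitz_of_norm 1" "\<pi> = u * \<pi>0" by blast
    then have "r = (s * qconj u) * \<pi>"
      using s(2) hurwitz_of_norm_mult_qconj(2)[OF u(1)] by (simp add: mult.assoc[symmetric]) (simp add: mult.assoc)
    moreover have "hurwitz (s * qconj u)"
      using s(1) hurwitz_of_norm_hurwitz[OF u(1)] by (simp add: hurwitz_mult hurwitz_qconj)
    ultimately have "right_dvd \<pi> r" unfolding right_dvd_def by blast
    then show "\<pi> \<in> {\<pi> \<in> hurwitz_of_norm p. right_dvd \<pi> r}"
      using hurwitz_of_norm_mult[OF u(1) \<pi>0(1)] u(2) by simp
  qed
  moreover have "inj_on (\<lambda>u. u * \<pi>0) (hurwitz_of_norm 1)"
    using hurwitz_of_norm_nonzero[OF \<pi>0(1)] prime_gt_0_nat[OF p] by (auto intro: inj_onI)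
  ultimately show ?thesis using False by (simp add: card_image)
qed

section \<open>The Hecke relation\<close>

lemma card_eq_sum_card_fibers:
  assumes "finite S" "f ` S \<subseteq> T" "finite T"
  shows "card S = (\<Sum>t\<in>T. card {s\<in>S. f s = t})"
proof -
  have "S = (\<Union>t\<in>T. {s\<in>S. f s = t})" using assms(2) by auto
  then have "card S = card (\<Union>t\<in>T. {s\<in>S. f s = t})" by simp
  also have "\<dots> = (\<Sum>t\<in>T. card {s\<in>S. f s = t})"
    by (rule card_UN_disjoint) (use assms in auto)
  finally show ?thesis .
qed

lemma card_nat_multiples_of_norm:
  assumes "p > 0"
  shows "card {r \<in> hurwitz_of_norm (p * m). nat_dvd p r} = (if p dvd m then card (hurwitz_of_norm (m div p)) else 0)"
proof -
  have norm_iff: "of_nat p * s \<in> hurwitz_of_norm (p * m) \<longleftrightarrow> int p * inorm s = int m" if "hurwitz s" for s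
    using that assms inorm_mult[OF hurwitz_of_nat that] by (simp add: hurwitz_of_norm_iff_inorm hurwitz_mult inorm_of_nat power2_eq_square)
  show ?thesis
  proof (cases "p dvd m")
    case True
    then obtain k where k: "m = p * k" by blast
    have k_iff: "of_nat p * s \<in> hurwitz_of_norm (p * m) \<longleftrightarrow> s \<in> hurwitz_of_norm k" if "hurwitz s" for s
      using norm_iff[OF that] that assms unfolding k by (simp add: hurwitz_of_norm_iff_inorm)
    have "{r \<in> hurwitz_of_norm (p * m). nat_dvd p r} = (\<lambda>s. of_nat p * s) ` hurwitz_of_norm k"
    proof (intro equalityI subsetI)
      fix r assume "r \<in> {r \<in> hurwitz_of_norm (p * m). nat_dvd p r}"
      then obtain s where "hurwitz s" "r = of_nat p * s" "r \<in> hurwitz_of_norm (p * m)"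
        unfolding nat_dvd_def by blast
      then show "r \<in> (\<lambda>s. of_nat p * s) ` hurwitz_of_norm k" using k_iff by blast
    next
      fix r assume "r \<in> (\<lambda>s. of_nat p * s) ` hurwitz_of_norm k"
      then obtain s where "s \<in> hurwitz_of_norm k" "r = of_nat p * s" by blast
      then show "r \<in> {r \<in> hurwitz_of_norm (p * m). nat_dvd p r}"
        using k_iff hurwitz_of_norm_hurwitz unfolding nat_dvd_def by blast
    qed
    moreover have "inj_on (\<lambda>s. of_nat p * s) (hurwitz_of_norm k)"
      using assms by (auto intro!: inj_onI simp: of_nat_quat zero_quat_def)
    ultimately show ?thesis using True k assms by (simp add: card_image)
  next
    case False
    have "\<not> nat_dvd p r" if "r \<in> hurwitz_of_norm (p * m)" for r
    proof
      assume "nat_dvd p r"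
      then obtain s where "hurwitz s" "r = of_nat p * s" unfolding nat_dvd_def by blast
      then have "int m = int p * inorm s" using norm_iff that by simp
      then have "int p dvd int m" by (rule dvdI)
      then show False using False by simp
    qed
    then have "{r \<in> hurwitz_of_norm (p * m). nat_dvd p r} = {}" by blast
    then show ?thesis using False by (metis card.empty)
  qed
qed

lemma card_factorisations:
  assumes "p > 0" and r: "r \<in> hurwitz_of_norm (p * m)"
  shows "card {x \<in> hurwitz_of_norm p \<times> hurwitz_of_norm m. snd x * fst x = r} =
    card {\<pi> \<in> hurwitz_of_norm p. right_dvd \<pi> r}"
proof -
  let ?F = "{x \<in> hurwitz_of_norm p \<times> hurwitz_of_norm m. snd x * fst x = r}"
  have image: "fst ` ?F = {\<pi> \<in> hurwitz_of_norm p. right_dvd \<pi> r}"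
  proof (intro equalityI subsetI)
    fix \<pi> assume "\<pi> \<in> fst ` ?F"
    then obtain s where "\<pi> \<in> hurwitz_of_norm p" "s \<in> hurwitz_of_norm m" "r = s * \<pi>" by force
    then show "\<pi> \<in> {\<pi> \<in> hurwitz_of_norm p. right_dvd \<pi> r}"
      unfolding right_dvd_def using hurwitz_of_norm_hurwitz by blast
  next
    fix \<pi> assume \<pi>: "\<pi> \<in> {\<pi> \<in> hurwitz_of_norm p. right_dvd \<pi> r}"
    then obtain s where s: "hurwitz s" "r = s * \<pi>" unfolding right_dvd_def by blast
    have "qnorm r = of_nat (p * m)" "qnorm \<pi> = of_nat p" using r \<pi> by (simp_all add: hurwitz_of_norm_def)
    then have "qnorm s * of_nat p = of_nat p * (of_nat m :: rat)" using s(2) by (simp only: qnorm_mult of_nat_mult)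
    then have "qnorm s = of_nat m" using assms(1) by (simp add: mult.commute)
    then have "s \<in> hurwitz_of_norm m" using s(1) by (simp add: hurwitz_of_norm_def)
    then show "\<pi> \<in> fst ` ?F" using s \<pi> by (auto intro!: image_eqI[of _ _ "(\<pi>, s)"])
  qed
  have "inj_on fst ?F"
  proof (rule inj_onI)
    fix x y assume xy: "x \<in> ?F" "y \<in> ?F" "fst x = fst y"
    then have "fst x \<in> hurwitz_of_norm p" "snd x * fst x = snd y * fst x" by auto
    then have "snd x = snd y" using hurwitz_of_norm_nonzero[of "fst x" p] assms(1) by simp
    then show "x = y" using xy(3) by (simp add: prod_eq_iff)
  qed
  then show ?thesis using card_image image by fastforce
qed

text \<open>Count the pairs \<open>(\<pi>, s)\<close> with \<open>N(\<pi>) = p\<close>, \<open>N(s) = m\<close> according to the product \<open>s \<pi>\<close>: a product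
  divisible by \<open>p\<close> arises from every \<open>\<pi>\<close>, any other from exactly \<open>N(1)\<close> of them.\<close>

lemma card_hurwitz_of_norm_prime_times:
  assumes p: "prime p"
  shows "card (hurwitz_of_norm p) * card (hurwitz_of_norm m) =
    card (hurwitz_of_norm 1) * card {r \<in> hurwitz_of_norm (p * m). \<not> nat_dvd p r} +
    card (hurwitz_of_norm p) * card {r \<in> hurwitz_of_norm (p * m). nat_dvd p r}"
proof -
  have p0: "p > 0" using p prime_gt_0_nat by blast
  let ?S = "hurwitz_of_norm p \<times> hurwitz_of_norm m"
  have "(\<lambda>x. snd x * fst x) ` ?S \<subseteq> hurwitz_of_norm (p * m)"
    using hurwitz_of_norm_mult by (auto simp: mult.commute)
  then have "card ?S = (\<Sum>r\<in>hurwitz_of_norm (p * m). card {x\<in>?S. snd x * fst x = r})"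
    by (intro card_eq_sum_card_fibers) (simp_all add: finite_hurwitz_of_norm)
  also have "\<dots> = (\<Sum>r\<in>hurwitz_of_norm (p * m).
      if nat_dvd p r then card (hurwitz_of_norm p) else card (hurwitz_of_norm 1))"
  proof (intro sum.cong refl)
    fix r assume r: "r \<in> hurwitz_of_norm (p * m)"
    then have "int p dvd inorm r" by (simp add: inorm_hurwitz_of_norm)
    then show "card {x\<in>?S. snd x * fst x = r} =
      (if nat_dvd p r then card (hurwitz_of_norm p) else card (hurwitz_of_norm 1))"
      using card_factorisations[OF p0 r] card_prime_norm_right_dvd[OF p hurwitz_of_norm_hurwitz[OF r]]
      by simp
  qed
  also have "\<dots> = card (hurwitz_of_norm 1) * card {r \<in> hurwitz_of_norm (p * m). \<not> nat_dvd p r} +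
      card (hurwitz_of_norm p) * card {r \<in> hurwitz_of_norm (p * m). nat_dvd p r}"
    by (simp add: sum.If_cases[OF finite_hurwitz_of_norm] Int_def set_diff_eq)
  finally show ?thesis by (simp add: card_cartesian_product)
qed

lemma card_hurwitz_of_norm_hecke:
  assumes p: "prime p" and card_p: "card (hurwitz_of_norm p) = card (hurwitz_of_norm 1) * (p + 1)"
  shows "card (hurwitz_of_norm (p * m)) + p * (if p dvd m then card (hurwitz_of_norm (m div p)) else 0) =
    (p + 1) * card (hurwitz_of_norm m)"
proof -
  define D where "D = card {r \<in> hurwitz_of_norm (p * m). nat_dvd p r}"
  define E where "E = card {r \<in> hurwitz_of_norm (p * m). \<not> nat_dvd p r}"
  have "hurwitz_of_norm (p * m) =
      {r \<in> hurwitz_of_norm (p * m). nat_dvd p r} \<union> {r \<in> hurwitz_of_norm (p * m). \<not> nat_dvd p r}" by blast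
  moreover have "finite {r \<in> hurwitz_of_norm (p * m). nat_dvd p r}"
    "finite {r \<in> hurwitz_of_norm (p * m). \<not> nat_dvd p r}" by (simp_all add: finite_hurwitz_of_norm)
  ultimately have "card (hurwitz_of_norm (p * m)) = D + E"
    unfolding D_def E_def by (simp add: card_Un_disjoint[symmetric] disjoint_iff)
  moreover have "card (hurwitz_of_norm 1) * ((p + 1) * card (hurwitz_of_norm m)) =
      card (hurwitz_of_norm 1) * (E + (p + 1) * D)"
    using card_hurwitz_of_norm_prime_times[OF p, of m] card_p unfolding D_def E_def
    by (simp add: algebra_simps)
  then have "(p + 1) * card (hurwitz_of_norm m) = E + (p + 1) * D"
    using finite_hurwitz_of_norm one_in_hurwitz_of_norm_1 card_gt_0_iff by (metis mult_left_cancel not_gr0 empty_iff)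
  moreover have "D = (if p dvd m then card (hurwitz_of_norm (m div p)) else 0)"
    unfolding D_def using card_nat_multiples_of_norm p prime_gt_0_nat by blast
  ultimately show ?thesis by (simp add: algebra_simps)
qed

section \<open>Hurwitz integers modulo an odd prime\<close>

lemma nat_dvd_0: "nat_dvd n 0"
  unfolding nat_dvd_def by (intro exI[of _ 0]) simp

lemma nat_dvd_add: "nat_dvd n u \<Longrightarrow> nat_dvd n v \<Longrightarrow> nat_dvd n (u + v)"
  unfolding nat_dvd_def by (metis distrib_left hurwitz_add)

lemma nat_dvd_uminus: "nat_dvd n u \<Longrightarrow> nat_dvd n (- u)"
  unfolding nat_dvd_def by (metis mult_minus_right hurwitz_uminus)

lemma nat_dvd_diff: "nat_dvd n u \<Longrightarrow> nat_dvd n v \<Longrightarrow> nat_dvd n (u - v)"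
  using nat_dvd_add[of n u "- v"] nat_dvd_uminus[of n v] by simp

lemma nat_dvd_left_mult: "nat_dvd n u \<Longrightarrow> hurwitz w \<Longrightarrow> nat_dvd n (w * u)"
  unfolding nat_dvd_def by (metis hurwitz_mult mult.assoc mult_of_nat_commute)

lemma nat_dvd_of_nat_mult: "hurwitz u \<Longrightarrow> nat_dvd n (of_nat n * u)"
  unfolding nat_dvd_def by blast

definition hcong :: "nat \<Rightarrow> quat \<Rightarrow> quat \<Rightarrow> bool" where
  "hcong n u v \<longleftrightarrow> nat_dvd n (u - v)"

lemma hcong_refl: "hcong n u u"
  by (simp add: hcong_def nat_dvd_0)

lemma hcong_sym: "hcong n u v \<Longrightarrow> hcong n v u"
  unfolding hcong_def using nat_dvd_uminus[of n "u - v"] by simp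

lemma hcong_trans: "hcong n u v \<Longrightarrow> hcong n v w \<Longrightarrow> hcong n u w"
  unfolding hcong_def using nat_dvd_add[of n "u - v" "v - w"] by simp

lemma hcong_add: "hcong n u v \<Longrightarrow> hcong n u' v' \<Longrightarrow> hcong n (u + u') (v + v')"
  unfolding hcong_def using nat_dvd_add[of n "u - v" "u' - v'"] by (simp add: algebra_simps)

lemma hcong_diff: "hcong n u v \<Longrightarrow> hcong n u' v' \<Longrightarrow> hcong n (u - u') (v - v')"
  unfolding hcong_def using nat_dvd_diff[of n "u - v" "u' - v'"] by (simp add: algebra_simps)

lemma hcong_left_mult: "hcong n u v \<Longrightarrow> hurwitz w \<Longrightarrow> hcong n (w * u) (w * v)"
  unfolding hcong_def using nat_dvd_left_mult[of n "u - v" w] by (simp add: right_diff_distrib)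

lemma hcong_right_mult: "hcong n u v \<Longrightarrow> hurwitz w \<Longrightarrow> hcong n (u * w) (v * w)"
  unfolding hcong_def using nat_dvd_right_mult[of n "u - v" w] by (simp add: left_diff_distrib)

lemma hcong_0_iff: "hcong n u 0 \<longleftrightarrow> nat_dvd n u"
  by (simp add: hcong_def)

lemma hcong_of_int_mult:
  assumes "hurwitz u" "int n dvd c - c'"
  shows "hcong n (of_int c * u) (of_int c' * u)"
proof -
  obtain t where t: "c - c' = int n * t" using assms(2) by blast
  have "of_int c * u - of_int c' * u = of_int (c - c') * u" by (simp add: algebra_simps)
  also have "\<dots> = of_nat n * (of_int t * u)" using t by (simp add: mult.assoc)
  finally have "of_int c * u - of_int c' * u = of_nat n * (of_int t * u)" .
  then show ?thesis unfolding hcong_def using nat_dvd_of_nat_mult hurwitz_mult assms(1) by simp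
qed

definition quat_of_ints :: "int \<times> int \<times> int \<times> int \<Rightarrow> quat" where
  "quat_of_ints = (\<lambda>(a, b, c, d). Quat (of_int a) (of_int b) (of_int c) (of_int d))"

lemma inj_quat_of_ints: "inj quat_of_ints"
  unfolding quat_of_ints_def by (auto intro!: injI)

lemma lipschitz_quat_of_ints: "lipschitz (quat_of_ints x)"
  unfolding quat_of_ints_def lipschitz_def by (auto split: prod.splits)

lemma inorm_quat_of_ints: "inorm (quat_of_ints (a, b, c, d)) = a^2 + b^2 + c^2 + d^2"
proof -
  have "qnorm (quat_of_ints (a, b, c, d)) = of_int (a^2 + b^2 + c^2 + d^2)"
    by (simp add: quat_of_ints_def qnorm_def)
  then show ?thesis using inorm_eq_iff lipschitz_imp_hurwitz lipschitz_quat_of_ints by blast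
qed

locale hurwitz_mod_p =
  fixes p :: nat
  assumes prime_p: "prime p" and odd_p: "odd p"
begin

sublocale odd_prime "int p"
  by unfold_locales (use prime_p odd_p in auto)

lemma p_pos: "p > 0"
  using prime_p prime_gt_0_nat by blast

text \<open>Canonical representatives of the Hurwitz integers modulo \<open>p\<close>: since \<open>2\<close> is invertible modulo
  \<open>p\<close>, every class contains a Lipschitz integer with coordinates in \<open>R\<close>.\<close>

definition reps :: "quat set" where "reps = quat_of_ints ` (R \<times> R \<times> R \<times> R)"

lemma finite_reps: "finite reps"
  unfolding reps_def using finite_R by simp

lemma card_reps: "card reps = p ^ 4"
proof -
  have "card reps = card (R \<times> R \<times> R \<times> R)"
    unfolding reps_def by (rule card_image) (rule inj_on_subset[OF inj_quat_of_ints], simp)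
  then show ?thesis using card_R by (simp add: card_cartesian_product power4_eq_xxxx)
qed

lemma hurwitz_reps: "x \<in> reps \<Longrightarrow> hurwitz x"
  unfolding reps_def using lipschitz_quat_of_ints lipschitz_imp_hurwitz by auto

lemma zero_in_reps: "0 \<in> reps"
proof -
  have "quat_of_ints (0, 0, 0, 0) = 0" unfolding quat_of_ints_def by (auto intro: quat_eqI)
  then show ?thesis unfolding reps_def using zero_in_R by force
qed

lemma lipschitz_hcong_reps:
  assumes "lipschitz l"
  shows "\<exists>x\<in>reps. hcong p l x"
proof -
  obtain a b c d where l: "re l = of_int a" "qi l = of_int b" "qj l = of_int c" "qk l = of_int d"
    using assms by (rule lipschitz_obtain)
  define x where "x = quat_of_ints (a mod int p, b mod int p, c mod int p, d mod int p)"
  define s where "s = quat_of_ints (a div int p, b div int p, c div int p, d div int p)"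
  have split: "(of_int k :: rat) = of_int (k mod int p) + of_nat p * of_int (k div int p)" for k
    by (metis mult_div_mod_eq add.commute of_int_add of_int_mult of_int_of_nat_eq)
  have "x \<in> reps" unfolding x_def reps_def using mod_in_R by auto
  moreover have "l - x = of_nat p * s"
    by (rule quat_eqI) (simp_all add: x_def s_def quat_of_ints_def l of_nat_quat split[of a]
      split[of b] split[of c] split[of d])
  moreover have "hurwitz s" unfolding s_def using lipschitz_quat_of_ints lipschitz_imp_hurwitz by blast
  ultimately show ?thesis unfolding hcong_def nat_dvd_def by blast
qed

text \<open>\<open>(p + 1) u\<close> is a Lipschitz integer congruent to \<open>u\<close>, because \<open>p + 1\<close> is even.\<close>

lemma hurwitz_hcong_reps:
  assumes "hurwitz u"
  shows "\<exists>x\<in>reps. hcong p u x"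
proof -
  obtain k where k: "p + 1 = 2 * k" using odd_p by (metis evenE odd_even_add odd_one)
  have "of_nat (p + 1) * omega = of_nat k * (omega + omega)"
    using k by (intro quat_eqI) (simp_all add: of_nat_quat)
  then have "lipschitz (of_nat (p + 1) * omega)"
    using lipschitz_mult[OF lipschitz_of_int[of "int k"] lipschitz_double_omega] by simp
  moreover obtain l where l: "lipschitz l" "u = l \<or> u = l + omega" using assms by (rule hurwitz_cases)
  moreover have "lipschitz (of_nat (p + 1) * l)"
    using lipschitz_mult[OF lipschitz_of_int[of "int (p + 1)"] l(1)] by simp
  ultimately have "lipschitz (of_nat (p + 1) * u)" by (auto simp: distrib_left intro: lipschitz_add)
  then obtain x where "x \<in> reps" "hcong p (of_nat (p + 1) * u) x" using lipschitz_hcong_reps by blast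
  moreover have "hcong p u (of_nat (p + 1) * u)"
    unfolding hcong_def using nat_dvd_of_nat_mult[OF hurwitz_uminus[OF assms], of p] by (simp add: algebra_simps)
  ultimately show ?thesis using hcong_trans by blast
qed

lemma reps_hcong_eq:
  assumes "x \<in> reps" "y \<in> reps" "hcong p x y"
  shows "x = y"
proof -
  obtain a b c d a' b' c' d' where x: "x = quat_of_ints (a, b, c, d)" "a \<in> R" "b \<in> R" "c \<in> R" "d \<in> R"
    and y: "y = quat_of_ints (a', b', c', d')" "a' \<in> R" "b' \<in> R" "c' \<in> R" "d' \<in> R"
    using assms(1,2) unfolding reps_def by auto
  obtain s where s: "hurwitz s" "x - y = of_nat p * s" using assms(3) unfolding hcong_def nat_dvd_def by blast
  have coord: "e = e'"
    if e: "e \<in> R" "e' \<in> R" "of_int (e - e') = (of_nat p * z :: rat)" "2 * z \<in> \<int>" for e e' z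
  proof -
    obtain m where "2 * z = of_int m" using e(4) by (auto elim!: Ints_cases)
    then have "(of_int (2 * (e - e')) :: rat) = of_int (int p * m)" using e(3) by (simp add: algebra_simps)
    then have "int p dvd 2 * (e - e')" by (simp only: of_int_eq_iff) simp
    then show ?thesis using R_eqI e(1,2) not_P_dvd_2 P_dvd_mult_iff by blast
  qed
  have "of_int (a - a') = (of_nat p * re s :: rat)" "of_int (b - b') = (of_nat p * qi s :: rat)"
    "of_int (c - c') = (of_nat p * qj s :: rat)" "of_int (d - d') = (of_nat p * qk s :: rat)"
    using arg_cong[OF s(2), of re] arg_cong[OF s(2), of qi] arg_cong[OF s(2), of qj] arg_cong[OF s(2), of qk]
    by (simp_all add: x(1) y(1) quat_of_ints_def of_nat_quat)
  then have "a = a'" "b = b'" "c = c'" "d = d'" using coord x y hurwitz_twice_Ints[OF s(1)] by blast+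
  then show ?thesis using x y by simp
qed

definition reduce :: "quat \<Rightarrow> quat" where "reduce u = (THE x. x \<in> reps \<and> hcong p u x)"

lemma reduce:
  assumes "hurwitz u"
  shows "reduce u \<in> reps" "hcong p u (reduce u)"
proof -
  obtain x where x: "x \<in> reps" "hcong p u x" using hurwitz_hcong_reps[OF assms] by blast
  have "\<exists>!x. x \<in> reps \<and> hcong p u x"
    using x reps_hcong_eq hcong_trans hcong_sym by (intro ex1I[of _ x]) blast+
  then have "reduce u \<in> reps \<and> hcong p u (reduce u)" unfolding reduce_def by (rule theI')
  then show "reduce u \<in> reps" "hcong p u (reduce u)" by auto
qed

lemma reduce_eq_iff:
  assumes "hurwitz u" "hurwitz v"
  shows "reduce u = reduce v \<longleftrightarrow> hcong p u v"
proof
  assume "reduce u = reduce v"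
  then show "hcong p u v" using reduce(2)[OF assms(1)] reduce(2)[OF assms(2)] hcong_trans hcong_sym by metis
next
  assume "hcong p u v"
  then have "hcong p (reduce u) (reduce v)"
    using reduce(2)[OF assms(1)] reduce(2)[OF assms(2)] hcong_trans hcong_sym by blast
  then show "reduce u = reduce v" using reduce(1) assms reps_hcong_eq by blast
qed

lemma reduce_reps: "x \<in> reps \<Longrightarrow> reduce x = x"
  using reps_hcong_eq[of x "reduce x"] reduce[of x] hurwitz_reps by simp

lemma not_nat_dvd_reps: "x \<in> reps \<Longrightarrow> x \<noteq> 0 \<Longrightarrow> \<not> nat_dvd p x"
  using reps_hcong_eq[of x 0] zero_in_reps hcong_0_iff by blast

end

definition quat_i :: quat where "quat_i = Quat 0 1 0 0"
definition quat_j :: quat where "quat_j = Quat 0 0 1 0"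

lemma quat_i_j_anticommute: "quat_i * quat_j + quat_j * quat_i = 0"
  and quat_i_sq: "quat_i * quat_i = -1"
  and quat_j_sq: "quat_j * quat_j = -1"
  by (auto intro!: quat_eqI simp: quat_i_def quat_j_def)

lemma hurwitz_quat_i: "hurwitz quat_i" and hurwitz_quat_j: "hurwitz quat_j"
  by (auto simp: quat_i_def quat_j_def hurwitz_def lipschitz_def)

context hurwitz_mod_p
begin

lemma not_nat_dvd_prime_norm:
  assumes "\<pi> \<in> hurwitz_of_norm p"
  shows "\<not> nat_dvd p \<pi>"
proof
  assume "nat_dvd p \<pi>"
  then obtain s where s: "hurwitz s" "\<pi> = of_nat p * s" unfolding nat_dvd_def by blast
  then have "int p = int p * (int p * inorm s)"
    using inorm_mult[OF hurwitz_of_nat s(1)] inorm_hurwitz_of_norm[OF assms] by (simp add: inorm_of_nat power2_eq_square)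
  then have "1 = int p * inorm s" using p_pos by simp
  then have "int p dvd 1" by (rule dvdI)
  then show False using P_gt_1 by simp
qed

lemma hcong_of_int_mult_0_cancel:
  assumes "hurwitz u" "\<not> int p dvd c" "hcong p (of_int c * u) 0"
  shows "hcong p u 0"
proof -
  obtain c' where c': "int p dvd c' * c - 1" using inverse_mod_exists[OF assms(2)] by (auto simp: mult.commute)
  have "hcong p (of_int c' * (of_int c * u)) 0" using hcong_left_mult[OF assms(3) hurwitz_of_int] by simp
  moreover have "hcong p (of_int (c' * c) * u) (of_int 1 * u)" by (rule hcong_of_int_mult[OF assms(1) c'])
  ultimately show ?thesis using hcong_trans hcong_sym by (metis mult.assoc mult_1 of_int_1 of_int_mult)
qed

text \<open>If \<open>(c + d w) \<pi> \<equiv> 0\<close> for a square root \<open>w\<close> of \<open>-1\<close>, then \<open>\<pi>\<close> is an eigenvector of left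
  multiplication by \<open>w\<close> modulo \<open>p\<close>, with eigenvalue \<open>-c/d\<close>.\<close>

lemma hcong_eigenvalue:
  assumes \<pi>: "hurwitz \<pi>" "\<not> hcong p \<pi> 0" and w: "hurwitz w" "w * w = -1"
    and cd: "hcong p ((of_int c + of_int d * w) * \<pi>) 0" "\<not> (int p dvd c \<and> int p dvd d)"
  shows "\<exists>l. hcong p (w * \<pi>) (of_int l * \<pi>) \<and> \<not> int p dvd l"
proof -
  have w\<pi>: "hurwitz (w * \<pi>)" using \<pi> w hurwitz_mult by blast
  have split: "(of_int c + of_int d * w) * \<pi> = of_int c * \<pi> + of_int d * (w * \<pi>)"
    by (simp add: algebra_simps mult.assoc)
  have "\<not> int p dvd d"
  proof
    assume "int p dvd d"
    then have "hcong p (of_int d * (w * \<pi>)) (of_int 0 * (w * \<pi>))" by (intro hcong_of_int_mult[OF w\<pi>]) simp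
    then have "hcong p (of_int c * \<pi>) 0"
      using cd(1) hcong_add[OF hcong_refl[of p "of_int c * \<pi>"]] hcong_trans hcong_sym unfolding split
      by (metis add_0_right mult_zero_left of_int_0)
    then show False using hcong_of_int_mult_0_cancel[OF \<pi>(1)] cd(2) \<pi>(2) \<open>int p dvd d\<close> by blast
  qed
  then obtain d' where "int p dvd d * d' - 1" using inverse_mod_exists by blast
  then have d': "int p dvd d' * d - 1" by (simp add: mult.commute)
  have "hcong p (of_int d' * ((of_int c + of_int d * w) * \<pi>)) 0"
    using hcong_left_mult[OF cd(1) hurwitz_of_int] by simp
  moreover have "of_int d' * ((of_int c + of_int d * w) * \<pi>) = of_int (d' * c) * \<pi> + of_int (d' * d) * (w * \<pi>)"
    unfolding split by (simp only: distrib_left of_int_mult mult.assoc)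
  moreover have "hcong p (of_int (d' * d) * (w * \<pi>)) (w * \<pi>)"
    using hcong_of_int_mult[OF w\<pi> d'] by simp
  ultimately have "hcong p (of_int (d' * c) * \<pi> + w * \<pi>) 0"
    using hcong_add[OF hcong_refl] hcong_trans hcong_sym by metis
  then have "hcong p (of_int (d' * c) * \<pi> + w * \<pi> - of_int (d' * c) * \<pi>) (0 - of_int (d' * c) * \<pi>)"
    using hcong_diff hcong_refl by blast
  then have ev: "hcong p (w * \<pi>) (of_int (- (d' * c)) * \<pi>)" by simp
  have "\<not> int p dvd - (d' * c)"
  proof
    assume "int p dvd - (d' * c)"
    then have "hcong p (w * \<pi>) 0"
      using ev hcong_of_int_mult[OF \<pi>(1), where c = "- (d' * c)" and c' = 0] hcong_trans by simp
    then have "hcong p (w * (w * \<pi>)) 0" using hcong_left_mult[OF _ w(1)] by fastforce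
    then have "nat_dvd p (- \<pi>)" using w(2) by (simp add: mult.assoc[symmetric] hcong_0_iff)
    then show False using \<pi>(2) nat_dvd_uminus[of p "- \<pi>"] by (simp add: hcong_0_iff)
  qed
  then show ?thesis using ev by blast
qed

text \<open>Since \<open>i j = - j i\<close>, eigenvalues \<open>l\<close>, \<open>m\<close> of \<open>i\<close> and \<open>j\<close> on the same \<open>\<pi>\<close> would give
  \<open>2 l m \<pi> \<equiv> 0\<close>.\<close>

lemma no_common_eigenvector:
  assumes \<pi>: "hurwitz \<pi>" "\<not> hcong p \<pi> 0"
    and l: "hcong p (quat_i * \<pi>) (of_int l * \<pi>)" "\<not> int p dvd l"
    and m: "hcong p (quat_j * \<pi>) (of_int m * \<pi>)" "\<not> int p dvd m"
  shows False
proof -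
  have "quat_i * (of_int m * \<pi>) = of_int m * (quat_i * \<pi>)"
    "quat_j * (of_int l * \<pi>) = of_int l * (quat_j * \<pi>)"
    by (simp_all only: mult.assoc[symmetric] mult_of_int_commute[of m quat_i] mult_of_int_commute[of l quat_j])
  then have "hcong p (quat_i * (quat_j * \<pi>)) (of_int m * (quat_i * \<pi>))"
    "hcong p (quat_j * (quat_i * \<pi>)) (of_int l * (quat_j * \<pi>))"
    using hcong_left_mult[OF m(1) hurwitz_quat_i] hcong_left_mult[OF l(1) hurwitz_quat_j] by simp_all
  moreover have "hcong p (of_int m * (quat_i * \<pi>)) (of_int (m * l) * \<pi>)"
    using hcong_left_mult[OF l(1) hurwitz_of_int] by (simp add: mult.assoc)
  moreover have "hcong p (of_int l * (quat_j * \<pi>)) (of_int (l * m) * \<pi>)"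
    using hcong_left_mult[OF m(1) hurwitz_of_int] by (simp add: mult.assoc)
  ultimately have "hcong p (quat_i * (quat_j * \<pi>) + quat_j * (quat_i * \<pi>)) (of_int (m * l) * \<pi> + of_int (l * m) * \<pi>)"
    using hcong_add hcong_trans by blast
  moreover have "quat_i * (quat_j * \<pi>) + quat_j * (quat_i * \<pi>) = 0"
    using quat_i_j_anticommute by (simp add: mult.assoc[symmetric] distrib_right[symmetric])
  moreover have "of_int (m * l) * \<pi> + of_int (l * m) * \<pi> = of_int (2 * l * m) * \<pi>"
    by (simp only: of_int_add[symmetric] distrib_right[symmetric]) (simp add: ac_simps)
  ultimately have "hcong p (of_int (2 * l * m) * \<pi>) 0" using hcong_sym by simp
  moreover have "\<not> int p dvd 2 * l * m" using l(2) m(2) not_P_dvd_2 P_dvd_mult_iff by simp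
  ultimately show False using hcong_of_int_mult_0_cancel[OF \<pi>(1)] \<pi>(2) by blast
qed

definition right_image :: "quat \<Rightarrow> quat set" where
  "right_image \<pi> = (\<lambda>y. reduce (y * \<pi>)) ` reps"

definition right_annihilator :: "quat \<Rightarrow> quat set" where
  "right_annihilator \<pi> = {y \<in> reps. nat_dvd p (y * \<pi>)}"

lemma right_image_subset: "hurwitz \<pi> \<Longrightarrow> right_image \<pi> \<subseteq> reps"
  unfolding right_image_def using reduce hurwitz_reps hurwitz_mult by auto

lemma reduce_mult_in_right_image:
  assumes "hurwitz \<pi>" "hurwitz s"
  shows "reduce (s * \<pi>) \<in> right_image \<pi>"
proof -
  have "reduce (reduce s * \<pi>) = reduce (s * \<pi>)"
    using reduce[OF assms(2)] hcong_right_mult[OF _ assms(1)] hcong_sym assms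
    by (simp add: reduce_eq_iff hurwitz_mult hurwitz_reps)
  then show ?thesis unfolding right_image_def using reduce(1)[OF assms(2)] by (metis image_eqI)
qed

lemma zero_in_right_image: "hurwitz \<pi> \<Longrightarrow> 0 \<in> right_image \<pi>"
  using reduce_mult_in_right_image[of \<pi> 0] reduce_reps[OF zero_in_reps] by simp

lemma right_image_iff:
  assumes \<pi>: "\<pi> \<in> hurwitz_of_norm p" and x: "x \<in> reps"
  shows "x \<in> right_image \<pi> \<longleftrightarrow> right_dvd \<pi> x"
proof
  assume "x \<in> right_image \<pi>"
  then obtain y where y: "y \<in> reps" "x = reduce (y * \<pi>)" unfolding right_image_def by blast
  have "hurwitz (y * \<pi>)" using y hurwitz_reps hurwitz_of_norm_hurwitz[OF \<pi>] hurwitz_mult by blast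
  then obtain t where t: "hurwitz t" "y * \<pi> - x = of_nat p * t"
    using reduce(2) y(2) unfolding hcong_def nat_dvd_def by blast
  have "x = y * \<pi> - t * of_nat p" using t(2) by (simp add: mult_of_nat_commute[of p t] algebra_simps)
  also have "\<dots> = (y - t * qconj \<pi>) * \<pi>"
    using hurwitz_of_norm_mult_qconj(2)[OF \<pi>] by (simp add: algebra_simps mult.assoc)
  finally have "x = (y - t * qconj \<pi>) * \<pi>" .
  moreover have "hurwitz (y - t * qconj \<pi>)"
    using y hurwitz_reps t(1) hurwitz_of_norm_hurwitz[OF \<pi>] by (simp add: hurwitz_diff hurwitz_mult hurwitz_qconj)
  ultimately show "right_dvd \<pi> x" unfolding right_dvd_def by blast
next
  assume "right_dvd \<pi> x"
  then obtain s where "hurwitz s" "x = s * \<pi>" unfolding right_dvd_def by blast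
  then show "x \<in> right_image \<pi>"
    using reduce_mult_in_right_image hurwitz_of_norm_hurwitz[OF \<pi>] reduce_reps[OF x] by metis
qed

lemma card_reps_translate:
  assumes y0: "y0 \<in> reps"
    and P: "\<And>u v. hurwitz u \<Longrightarrow> hurwitz v \<Longrightarrow> hcong p u v \<Longrightarrow> P u \<longleftrightarrow> P v"
  shows "card {y \<in> reps. P (y - y0)} = card {k \<in> reps. P k}"
proof -
  have h: "hurwitz y0" "\<And>y. y \<in> reps \<Longrightarrow> hurwitz y" using y0 hurwitz_reps by auto
  have left_inv: "reduce (reduce (y - y0) + y0) = y" if "y \<in> reps" for y
  proof -
    have "hurwitz (y - y0)" using that h hurwitz_diff by blast
    then have "hcong p (reduce (y - y0) + y0) (y - y0 + y0)"
      using reduce hcong_add hcong_sym hcong_refl by blast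
    then have "reduce (reduce (y - y0) + y0) = reduce y"
      using reduce(1) \<open>hurwitz (y - y0)\<close> h that by (simp add: reduce_eq_iff hurwitz_add hurwitz_reps)
    then show ?thesis using reduce_reps[OF that] by simp
  qed
  have right_inv: "reduce (reduce (k + y0) - y0) = k" if "k \<in> reps" for k
  proof -
    have "hurwitz (k + y0)" using that h hurwitz_add by blast
    then have "hcong p (reduce (k + y0) - y0) (k + y0 - y0)"
      using reduce hcong_diff hcong_sym hcong_refl by blast
    then have "reduce (reduce (k + y0) - y0) = reduce k"
      using reduce(1) \<open>hurwitz (k + y0)\<close> h that by (simp add: reduce_eq_iff hurwitz_diff hurwitz_reps)
    then show ?thesis using reduce_reps[OF that] by simp
  qed
  have "bij_betw (\<lambda>y. reduce (y - y0)) {y \<in> reps. P (y - y0)} {k \<in> reps. P k}"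
  proof (rule bij_betw_byWitness[where f' = "\<lambda>k. reduce (k + y0)"])
    have "reduce (y - y0) \<in> reps" "P (reduce (y - y0)) \<longleftrightarrow> P (y - y0)" if "y \<in> reps" for y
      using reduce[of "y - y0"] P[of "y - y0" "reduce (y - y0)"] h that hurwitz_diff by auto
    then show "(\<lambda>y. reduce (y - y0)) ` {y \<in> reps. P (y - y0)} \<subseteq> {k \<in> reps. P k}" by auto
    show "(\<lambda>k. reduce (k + y0)) ` {k \<in> reps. P k} \<subseteq> {y \<in> reps. P (y - y0)}"
    proof
      fix y assume "y \<in> (\<lambda>k. reduce (k + y0)) ` {k \<in> reps. P k}"
      then obtain k where k: "k \<in> reps" "P k" "y = reduce (k + y0)" by blast
      have "y \<in> reps" using k h reduce hurwitz_add by simp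
      moreover have "P (reduce (y - y0))" using right_inv[OF k(1)] k by simp
      then have "P (y - y0)" using P[of "y - y0" "reduce (y - y0)"] reduce h \<open>y \<in> reps\<close> hurwitz_diff
        by blast
      ultimately show "y \<in> {y \<in> reps. P (y - y0)}" by blast
    qed
  qed (use left_inv right_inv in auto)
  then show ?thesis by (rule bij_betw_same_card)
qed

lemma card_right_mult_fiber:
  assumes \<pi>: "hurwitz \<pi>" and y0: "y0 \<in> reps"
  shows "card {y \<in> reps. reduce (y * \<pi>) = reduce (y0 * \<pi>)} = card (right_annihilator \<pi>)"
proof -
  have "reduce (y * \<pi>) = reduce (y0 * \<pi>) \<longleftrightarrow> nat_dvd p ((y - y0) * \<pi>)" if "y \<in> reps" for y
    using that y0 \<pi> hurwitz_reps by (simp add: reduce_eq_iff hurwitz_mult hcong_def left_diff_distrib)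
  then have "{y \<in> reps. reduce (y * \<pi>) = reduce (y0 * \<pi>)} = {y \<in> reps. nat_dvd p ((y - y0) * \<pi>)}" by blast
  also have "card \<dots> = card {k \<in> reps. nat_dvd p (k * \<pi>)}"
  proof (rule card_reps_translate[OF y0])
    fix u v assume "hurwitz u" "hurwitz v" "hcong p u v"
    then have "hcong p (u * \<pi>) (v * \<pi>)" using hcong_right_mult \<pi> by blast
    then show "nat_dvd p (u * \<pi>) \<longleftrightarrow> nat_dvd p (v * \<pi>)"
      using hcong_0_iff hcong_trans hcong_sym by metis
  qed
  finally show ?thesis unfolding right_annihilator_def .
qed

lemma card_reps_eq_mult:
  assumes "hurwitz \<pi>"
  shows "card reps = card (right_image \<pi>) * card (right_annihilator \<pi>)"
proof -
  have "card reps = (\<Sum>x\<in>right_image \<pi>. card {y \<in> reps. reduce (y * \<pi>) = x})"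
    by (rule card_eq_sum_card_fibers)
      (use right_image_subset[OF assms] finite_reps finite_subset in \<open>auto simp: right_image_def\<close>)
  also have "\<dots> = (\<Sum>x\<in>right_image \<pi>. card (right_annihilator \<pi>))"
    using card_right_mult_fiber[OF assms] unfolding right_image_def by (intro sum.cong) auto
  finally show ?thesis by simp
qed

lemma right_image_qconj_subset:
  assumes \<pi>: "\<pi> \<in> hurwitz_of_norm p"
  shows "right_image (qconj \<pi>) \<subseteq> right_annihilator \<pi>"
proof
  fix y assume "y \<in> right_image (qconj \<pi>)"
  then obtain s where s: "s \<in> reps" "y = reduce (s * qconj \<pi>)" unfolding right_image_def by blast
  have h: "hurwitz (s * qconj \<pi>)" "hurwitz \<pi>"
    using s hurwitz_reps hurwitz_of_norm_hurwitz[OF \<pi>] hurwitz_qconj hurwitz_mult by auto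
  then have "y \<in> reps" "hcong p (s * qconj \<pi> * \<pi>) (y * \<pi>)"
    using reduce[OF h(1)] hcong_right_mult s(2) by auto
  moreover have "s * qconj \<pi> * \<pi> = of_nat p * s"
    using hurwitz_of_norm_mult_qconj(2)[OF \<pi>] by (simp add: mult.assoc mult_of_nat_commute[of p s])
  moreover have "hcong p (of_nat p * s) 0"
    using nat_dvd_of_nat_mult[of s p] s(1) hurwitz_reps by (simp add: hcong_0_iff)
  ultimately have "y \<in> reps" "hcong p (y * \<pi>) 0" using hcong_trans[OF hcong_sym] by metis+
  then show "y \<in> right_annihilator \<pi>" unfolding right_annihilator_def by (simp add: hcong_0_iff)
qed

end

lemma sum_card_filter_swap:
  assumes "finite X" "finite Y"
  shows "(\<Sum>a\<in>X. card {b \<in> Y. r a b}) = (\<Sum>b\<in>Y. card {a \<in> X. r a b})"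
proof -
  have card_eq: "card {b \<in> B. P b} = (\<Sum>b\<in>B. if P b then 1 else 0)" if "finite B" for B and P :: "'c \<Rightarrow> bool"
    using sum.inter_filter[OF that, of "\<lambda>_. 1 :: nat" P] by simp
  have "(\<Sum>a\<in>X. card {b \<in> Y. r a b}) = (\<Sum>a\<in>X. \<Sum>b\<in>Y. if r a b then 1 else 0)"
    using card_eq[OF assms(2)] by simp
  also have "\<dots> = (\<Sum>b\<in>Y. \<Sum>a\<in>X. if r a b then 1 else 0)" by (rule sum.swap)
  also have "\<dots> = (\<Sum>b\<in>Y. card {a \<in> X. r a b})" using card_eq[OF assms(1)] by simp
  finally show ?thesis .
qed

context hurwitz_mod_p
begin

lemma eigenvalue_if_not_inj:
  assumes \<pi>: "\<pi> \<in> hurwitz_of_norm p" and w: "hurwitz w" "w * w = -1"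
    and not_inj: "\<not> inj_on (\<lambda>(a, b). reduce ((of_int a + of_int b * w) * \<pi>)) (R \<times> R)"
  shows "\<exists>l. hcong p (w * \<pi>) (of_int l * \<pi>) \<and> \<not> int p dvd l"
proof -
  have h: "hurwitz \<pi>" "hurwitz ((of_int a + of_int b * w) * \<pi>)" for a b
    using \<pi> w hurwitz_of_norm_hurwitz by (simp_all add: hurwitz_add hurwitz_mult)
  obtain a b a' b' where ab: "a \<in> R" "b \<in> R" "a' \<in> R" "b' \<in> R" "(a, b) \<noteq> (a', b')"
    "reduce ((of_int a + of_int b * w) * \<pi>) = reduce ((of_int a' + of_int b' * w) * \<pi>)"
    using not_inj unfolding inj_on_def by auto
  then have "hcong p ((of_int a + of_int b * w) * \<pi> - (of_int a' + of_int b' * w) * \<pi>) 0"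
    using h(2) by (simp add: reduce_eq_iff hcong_def)
  moreover have "(of_int a + of_int b * w) * \<pi> - (of_int a' + of_int b' * w) * \<pi> =
      (of_int (a - a') + of_int (b - b') * w) * \<pi>"
    by (simp add: algebra_simps)
  moreover have ab_ndvd: "\<not> (int p dvd a - a' \<and> int p dvd b - b')" using R_eqI ab by blast
  moreover have "\<not> hcong p \<pi> 0" using not_nat_dvd_prime_norm[OF \<pi>] by (simp add: hcong_0_iff)
  ultimately have "hcong p ((of_int (a - a') + of_int (b - b') * w) * \<pi>) 0" by simp
  then show ?thesis using hcong_eigenvalue[OF h(1) _ w] \<open>\<not> hcong p \<pi> 0\<close> ab_ndvd by blast
qed

text \<open>One of the maps \<open>(a, b) \<mapsto> (a + b i) \<pi>\<close>, \<open>(a, b) \<mapsto> (a + b j) \<pi>\<close> is injective modulo \<open>p\<close>,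
  since \<open>\<pi>\<close> cannot be an eigenvector of both \<open>i\<close> and \<open>j\<close>.\<close>

lemma card_right_image_ge:
  assumes \<pi>: "\<pi> \<in> hurwitz_of_norm p"
  shows "p ^ 2 \<le> card (right_image \<pi>)"
proof -
  define F where "F w = (\<lambda>(a, b). reduce ((of_int a + of_int b * w) * \<pi>))" for w
  have "inj_on (F quat_i) (R \<times> R) \<or> inj_on (F quat_j) (R \<times> R)"
    using eigenvalue_if_not_inj[OF \<pi> hurwitz_quat_i quat_i_sq] eigenvalue_if_not_inj[OF \<pi> hurwitz_quat_j quat_j_sq]
      no_common_eigenvector hurwitz_of_norm_hurwitz[OF \<pi>] not_nat_dvd_prime_norm[OF \<pi>]
    unfolding F_def hcong_0_iff by blast
  then obtain w where w: "hurwitz w" "inj_on (F w) (R \<times> R)" using hurwitz_quat_i hurwitz_quat_j by blast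
  have "F w ` (R \<times> R) \<subseteq> right_image \<pi>"
    using reduce_mult_in_right_image hurwitz_of_norm_hurwitz[OF \<pi>] w(1)
    unfolding F_def by (auto simp: hurwitz_add hurwitz_mult)
  moreover have "finite (right_image \<pi>)"
    using right_image_subset hurwitz_of_norm_hurwitz[OF \<pi>] finite_reps finite_subset by blast
  ultimately have "card (R \<times> R) \<le> card (right_image \<pi>)"
    using card_image[OF w(2)] card_mono by metis
  then show ?thesis using card_R by (simp add: card_cartesian_product power2_eq_square)
qed

text \<open>Right multiplication by \<open>\<pi>\<close> and by \<open>qconj \<pi>\<close> both have images of size at least \<open>p\<^sup>2\<close>, and the
  second image lies in the kernel of the first; as \<open>p\<^sup>4\<close> is image size times kernel size, both are
  exactly \<open>p\<^sup>2\<close>.\<close>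

lemma card_right_image:
  assumes \<pi>: "\<pi> \<in> hurwitz_of_norm p"
  shows "card (right_image \<pi>) = p ^ 2"
proof -
  have "finite (right_annihilator \<pi>)" unfolding right_annihilator_def using finite_reps by simp
  then have "p ^ 2 \<le> card (right_annihilator \<pi>)"
    using card_right_image_ge[OF qconj_hurwitz_of_norm[OF \<pi>]] right_image_qconj_subset[OF \<pi>] card_mono
    by (metis le_trans)
  moreover have "p ^ 2 * p ^ 2 = card (right_image \<pi>) * card (right_annihilator \<pi>)"
    using card_reps_eq_mult[OF hurwitz_of_norm_hurwitz[OF \<pi>]] card_reps by (simp flip: power_add)
  ultimately have "card (right_image \<pi>) \<le> p ^ 2"
    using p_pos by (metis mult_le_mono2 mult_le_cancel2 zero_less_power)
  then show ?thesis using card_right_image_ge[OF \<pi>] by simp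
qed

lemma card_prime_norm_with_right_image:
  assumes x: "x \<in> reps" "x \<noteq> 0"
  shows "card {\<pi> \<in> hurwitz_of_norm p. x \<in> right_image \<pi>} =
    (if int p dvd inorm x then card (hurwitz_of_norm 1) else 0)"
proof -
  have eq: "{\<pi> \<in> hurwitz_of_norm p. x \<in> right_image \<pi>} = {\<pi> \<in> hurwitz_of_norm p. right_dvd \<pi> x}"
    using right_image_iff x(1) by blast
  have "int p dvd inorm x" if \<pi>: "\<pi> \<in> hurwitz_of_norm p" "right_dvd \<pi> x" for \<pi>
  proof -
    obtain s where "hurwitz s" "x = s * \<pi>" using \<pi>(2) unfolding right_dvd_def by blast
    then show ?thesis
      using inorm_mult hurwitz_of_norm_hurwitz[OF \<pi>(1)] inorm_hurwitz_of_norm[OF \<pi>(1)] by simp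
  qed
  then have empty: "{\<pi> \<in> hurwitz_of_norm p. right_dvd \<pi> x} = {}" if "\<not> int p dvd inorm x"
    using that by blast
  show ?thesis
  proof (cases "int p dvd inorm x")
    case True
    then show ?thesis using eq card_prime_norm_right_dvd[OF prime_p hurwitz_reps[OF x(1)]] not_nat_dvd_reps[OF x]
      by simp
  next
    case False
    have "card {\<pi> \<in> hurwitz_of_norm p. x \<in> right_image \<pi>} = card ({} :: quat set)"
      using eq empty[OF False] by (simp only:)
    then show ?thesis using False by simp
  qed
qed

lemma card_nonzero_null_reps: "card {x \<in> reps - {0}. int p dvd inorm x} = (p + 1) * (p^2 - 1)"
proof -
  define q where "q = p^2 - 1"
  then have q: "int q = int p ^ 2 - 1" using p_pos by (simp add: of_nat_diff)
  have "{x \<in> reps. int p dvd inorm x} = quat_of_ints ` null_quadruples"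
    unfolding reps_def null_quadruples_def by (auto simp: inorm_quat_of_ints)
  then have "int (card {x \<in> reps. int p dvd inorm x}) = int p ^ 3 + int p ^ 2 - int p"
    using card_null_quadruples by (simp add: card_image inj_on_subset[OF inj_quat_of_ints])
  also have "\<dots> = (int p + 1) * int q + 1"
    unfolding q by (simp add: power2_eq_square power3_eq_cube algebra_simps)
  also have "\<dots> = int ((p + 1) * q + 1)" by (simp add: algebra_simps)
  finally have "card {x \<in> reps. int p dvd inorm x} = (p + 1) * q + 1" by (simp only: of_nat_eq_iff)
  moreover have "{x \<in> reps - {0}. int p dvd inorm x} = {x \<in> reps. int p dvd inorm x} - {0}" by blast
  moreover have "0 \<in> {x \<in> reps. int p dvd inorm x}" using zero_in_reps by (simp add: inorm_def)
  ultimately show ?thesis using finite_reps unfolding q_def by simp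
qed

text \<open>Double count the pairs \<open>(\<pi>, x)\<close> with \<open>N(\<pi>) = p\<close> and \<open>x\<close> a nonzero element of the image of
  right multiplication by \<open>\<pi>\<close> modulo \<open>p\<close>.\<close>

theorem card_hurwitz_of_norm_prime: "card (hurwitz_of_norm p) = card (hurwitz_of_norm 1) * (p + 1)"
proof -
  define Y where "Y = reps - {0}"
  have "finite Y" unfolding Y_def using finite_reps by simp
  have "card {x \<in> Y. x \<in> right_image \<pi>} = p^2 - 1" if "\<pi> \<in> hurwitz_of_norm p" for \<pi>
  proof -
    have "{x \<in> Y. x \<in> right_image \<pi>} = right_image \<pi> - {0}"
      unfolding Y_def using right_image_subset hurwitz_of_norm_hurwitz[OF that] by blast
    then show ?thesis using card_right_image[OF that] zero_in_right_image hurwitz_of_norm_hurwitz[OF that]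
      by simp
  qed
  then have "card (hurwitz_of_norm p) * (p^2 - 1) = (\<Sum>\<pi>\<in>hurwitz_of_norm p. card {x \<in> Y. x \<in> right_image \<pi>})"
    by simp
  also have "\<dots> = (\<Sum>x\<in>Y. card {\<pi> \<in> hurwitz_of_norm p. x \<in> right_image \<pi>})"
    by (rule sum_card_filter_swap[OF finite_hurwitz_of_norm \<open>finite Y\<close>])
  also have "\<dots> = (\<Sum>x\<in>Y. if int p dvd inorm x then card (hurwitz_of_norm 1) else 0)"
    using card_prime_norm_with_right_image unfolding Y_def by (intro sum.cong) auto
  also have "\<dots> = (\<Sum>x\<in>{x \<in> Y. int p dvd inorm x}. card (hurwitz_of_norm 1))"
    by (rule sum.inter_filter[OF \<open>finite Y\<close>, symmetric])
  also have "\<dots> = card (hurwitz_of_norm 1) * ((p + 1) * (p^2 - 1))"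
    using card_nonzero_null_reps unfolding Y_def by simp
  finally have "card (hurwitz_of_norm p) * (p^2 - 1) = card (hurwitz_of_norm 1) * (p + 1) * (p^2 - 1)"
    by (simp only: mult.assoc)
  moreover have "1 < p^2" using P_ge_3 one_less_power[of p 2] by simp
  ultimately show ?thesis by simp
qed

end

section \<open>Jacobi's formula for odd numbers\<close>

lemma card_hurwitz_of_norm_odd:
  assumes "odd n"
  shows "card (hurwitz_of_norm n) = card (hurwitz_of_norm 1) * sigma n"
proof (rule odd_eq_sigma_if_hecke[where f = "\<lambda>n. card (hurwitz_of_norm n)", OF _ assms])
  fix p m :: nat assume "prime p" "odd p"
  then interpret hurwitz_mod_p p by unfold_locales
  show "card (hurwitz_of_norm (p * m)) + p * (if p dvd m then card (hurwitz_of_norm (m div p)) else 0) =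
      (p + 1) * card (hurwitz_of_norm m)"
    by (rule card_hurwitz_of_norm_hecke[OF prime_p card_hurwitz_of_norm_prime])
qed

definition lipschitz_of_norm :: "nat \<Rightarrow> quat set" where
  "lipschitz_of_norm n = {q \<in> hurwitz_of_norm n. lipschitz q}"

definition half_of_norm :: "nat \<Rightarrow> quat set" where
  "half_of_norm n = {q \<in> hurwitz_of_norm n. \<not> lipschitz q}"

lemma card_hurwitz_of_norm_split: "card (hurwitz_of_norm n) = card (lipschitz_of_norm n) + card (half_of_norm n)"
proof -
  have "hurwitz_of_norm n = lipschitz_of_norm n \<union> half_of_norm n" "lipschitz_of_norm n \<inter> half_of_norm n = {}"
    unfolding lipschitz_of_norm_def half_of_norm_def by auto
  moreover have "finite (lipschitz_of_norm n)" "finite (half_of_norm n)"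
    unfolding lipschitz_of_norm_def half_of_norm_def using finite_hurwitz_of_norm by auto
  ultimately show ?thesis by (simp add: card_Un_disjoint)
qed

lemma half_of_int_Ints_iff: "(of_int k / 2 :: rat) \<in> \<int> \<longleftrightarrow> even k"
proof
  assume "(of_int k / 2 :: rat) \<in> \<int>"
  then obtain j where "(of_int k / 2 :: rat) = of_int j" by (auto elim!: Ints_cases)
  then have "k = 2 * j" by (simp add: field_simps)
  then show "even k" by simp
qed (auto elim!: evenE)

lemma even_sum_four_squares_iff:
  fixes a b c d :: int
  shows "even (a^2 + b^2 + c^2 + d^2) \<longleftrightarrow> even (a + b + c + d)"
  by (simp add: power2_eq_square)

lemma omega_in_hurwitz_of_norm_1: "omega \<in> hurwitz_of_norm 1"
  and omega_minus_1_in_hurwitz_of_norm_1: "omega - 1 \<in> hurwitz_of_norm 1"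
  by (simp_all add: hurwitz_of_norm_def hurwitz_diff qnorm_def power2_eq_square)

text \<open>For odd \<open>n\<close>, the coordinate sum of a Lipschitz integer of norm \<open>n\<close> is odd, so multiplying by
  \<open>omega\<close> or \<open>omega - 1\<close> produces half-odd coordinates.\<close>

lemma not_lipschitz_omega_mult:
  assumes "lipschitz q" "odd (inorm q)"
  shows "\<not> lipschitz (omega * q)" "\<not> lipschitz ((omega - 1) * q)"
proof -
  obtain a b c d where q: "re q = of_int a" "qi q = of_int b" "qj q = of_int c" "qk q = of_int d"
    using assms(1) by (rule lipschitz_obtain)
  have "qnorm q = of_int (a^2 + b^2 + c^2 + d^2)" by (simp add: qnorm_def q)
  then have "odd (a + b + c + d)"
    using assms inorm_eq_iff[OF lipschitz_imp_hurwitz] even_sum_four_squares_iff by metis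
  then have odd: "odd (a - b - c - d)" "odd (- a - b - c - d)" by presburger+
  have re: "re (omega * q) = of_int (a - b - c - d) / 2" "re ((omega - 1) * q) = of_int (- a - b - c - d) / 2"
    by (simp_all add: q field_simps)
  show "\<not> lipschitz (omega * q)" "\<not> lipschitz ((omega - 1) * q)"
    unfolding lipschitz_def re half_of_int_Ints_iff using odd by simp_all
qed

lemma lipschitz_omega_mult_cases:
  assumes "hurwitz q" "\<not> lipschitz q"
  shows "lipschitz (omega * q) \<or> lipschitz ((omega - 1) * q)"
proof -
  have "lipschitz (q - omega)" using assms unfolding hurwitz_def by blast
  then obtain a b c d where q: "re q = of_int a + 1/2" "qi q = of_int b + 1/2" "qj q = of_int c + 1/2"
    "qk q = of_int d + 1/2"
    by (rule lipschitz_obtain) (simp add: algebra_simps)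
  have e: "re (omega * q) = of_int (a - b - c - d - 1) / 2" "qi (omega * q) = of_int (a + b - c + d + 1) / 2"
    "qj (omega * q) = of_int (a + b + c - d + 1) / 2" "qk (omega * q) = of_int (a - b + c + d + 1) / 2"
    "re ((omega - 1) * q) = of_int (- a - b - c - d - 2) / 2" "qi ((omega - 1) * q) = of_int (a - b - c + d) / 2"
    "qj ((omega - 1) * q) = of_int (a + b - c - d) / 2" "qk ((omega - 1) * q) = of_int (a - b + c - d) / 2"
    by (simp_all add: q field_simps)
  show ?thesis unfolding lipschitz_def e half_of_int_Ints_iff by presburger
qed

lemma card_eq_card_lipschitz_of_norm_by_unit:
  assumes u: "u \<in> hurwitz_of_norm 1"
    and S: "\<And>q. q \<in> S \<Longrightarrow> q \<in> hurwitz_of_norm n \<and> lipschitz (u * q)"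
    and T: "\<And>v. v \<in> lipschitz_of_norm n \<Longrightarrow> qconj u * v \<in> S"
  shows "card S = card (lipschitz_of_norm n)"
proof -
  have "bij_betw (\<lambda>q. u * q) S (lipschitz_of_norm n)"
  proof (rule bij_betw_byWitness[where f' = "\<lambda>v. qconj u * v"])
    show "(\<lambda>q. u * q) ` S \<subseteq> lipschitz_of_norm n"
      using S hurwitz_of_norm_mult[OF u] unfolding lipschitz_of_norm_def by fastforce
  qed (use hurwitz_of_norm_mult_qconj[OF u] T in \<open>auto simp: mult.assoc[symmetric]\<close>)
  then show ?thesis by (rule bij_betw_same_card)
qed

text \<open>For odd \<open>n\<close>, the units \<open>omega\<close> and \<open>omega - 1\<close> map the two halves of the non-Lipschitz
  elements of norm \<open>n\<close> bijectively onto the Lipschitz ones.\<close>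

lemma card_half_of_norm:
  assumes "odd n"
  shows "card (half_of_norm n) = 2 * card (lipschitz_of_norm n)"
proof -
  define L1 where "L1 = {q \<in> half_of_norm n. lipschitz (omega * q)}"
  define L2 where "L2 = {q \<in> half_of_norm n. \<not> lipschitz (omega * q)}"
  have odd_inorm: "odd (inorm q)" if "q \<in> hurwitz_of_norm n" for q
    using inorm_hurwitz_of_norm[OF that] assms by simp
  have "card L1 = card (lipschitz_of_norm n)"
  proof (rule card_eq_card_lipschitz_of_norm_by_unit[OF omega_in_hurwitz_of_norm_1])
    fix v assume v: "v \<in> lipschitz_of_norm n"
    then have w: "qconj omega * v \<in> hurwitz_of_norm n" "omega * (qconj omega * v) = v"
      using hurwitz_of_norm_mult[OF qconj_hurwitz_of_norm[OF omega_in_hurwitz_of_norm_1], of v n]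
        hurwitz_of_norm_mult_qconj(1)[OF omega_in_hurwitz_of_norm_1]
      unfolding lipschitz_of_norm_def by (simp_all add: mult.assoc[symmetric])
    then have "\<not> lipschitz (qconj omega * v)"
      using not_lipschitz_omega_mult(1) odd_inorm v unfolding lipschitz_of_norm_def by fastforce
    then show "qconj omega * v \<in> L1" using w v unfolding L1_def half_of_norm_def lipschitz_of_norm_def by simp
  qed (auto simp: L1_def half_of_norm_def)
  moreover have "card L2 = card (lipschitz_of_norm n)"
  proof (rule card_eq_card_lipschitz_of_norm_by_unit[OF omega_minus_1_in_hurwitz_of_norm_1])
    fix v assume v: "v \<in> lipschitz_of_norm n"
    let ?w = "qconj (omega - 1) * v"
    have w: "?w \<in> hurwitz_of_norm n" "(omega - 1) * ?w = v"
      using hurwitz_of_norm_mult[OF qconj_hurwitz_of_norm[OF omega_minus_1_in_hurwitz_of_norm_1], of v n]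
        hurwitz_of_norm_mult_qconj(1)[OF omega_minus_1_in_hurwitz_of_norm_1] v
      unfolding lipschitz_of_norm_def by (simp_all add: mult.assoc[symmetric])
    then have "\<not> lipschitz ?w"
      using not_lipschitz_omega_mult(2) odd_inorm v unfolding lipschitz_of_norm_def by fastforce
    moreover have "omega * ?w = (omega - 1) * ?w + ?w" by (simp add: algebra_simps)
    then have "\<not> lipschitz (omega * ?w)"
      using \<open>\<not> lipschitz ?w\<close> w(2) v lipschitz_diff unfolding lipschitz_of_norm_def by fastforce
    ultimately show "?w \<in> L2" using w unfolding L2_def half_of_norm_def by simp
  qed (use lipschitz_omega_mult_cases in \<open>auto simp: L2_def half_of_norm_def hurwitz_of_norm_def\<close>)
  moreover have "half_of_norm n = L1 \<union> L2" "L1 \<inter> L2 = {}" "finite L1" "finite L2"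
    unfolding L1_def L2_def half_of_norm_def using finite_hurwitz_of_norm by auto
  ultimately show ?thesis by (simp add: card_Un_disjoint)
qed

definition four_squares :: "nat \<Rightarrow> (int \<times> int \<times> int \<times> int) set" where
  "four_squares n = {(a, b, c, d). a^2 + b^2 + c^2 + d^2 = int n}"

definition odd_four_squares :: "nat \<Rightarrow> (int \<times> int \<times> int \<times> int) set" where
  "odd_four_squares n = {(a, b, c, d). odd a \<and> odd b \<and> odd c \<and> odd d \<and> a^2 + b^2 + c^2 + d^2 = 4 * int n}"

definition quat_of_halves :: "int \<times> int \<times> int \<times> int \<Rightarrow> quat" where
  "quat_of_halves = (\<lambda>(a, b, c, d). Quat (of_int a / 2) (of_int b / 2) (of_int c / 2) (of_int d / 2))"

lemma lipschitz_of_norm_eq_image: "lipschitz_of_norm n = quat_of_ints ` four_squares n"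
proof (intro equalityI subsetI)
  fix q assume q: "q \<in> lipschitz_of_norm n"
  then obtain a b c d where abcd: "re q = of_int a" "qi q = of_int b" "qj q = of_int c" "qk q = of_int d"
    unfolding lipschitz_of_norm_def by (blast elim: lipschitz_obtain)
  then have "q = quat_of_ints (a, b, c, d)" unfolding quat_of_ints_def by (auto intro: quat_eqI)
  moreover have "(a, b, c, d) \<in> four_squares n"
    using q inorm_hurwitz_of_norm inorm_quat_of_ints unfolding calculation lipschitz_of_norm_def four_squares_def
    by fastforce
  ultimately show "q \<in> quat_of_ints ` four_squares n" by blast
next
  fix q assume "q \<in> quat_of_ints ` four_squares n"
  then obtain a b c d where "q = quat_of_ints (a, b, c, d)" "a^2 + b^2 + c^2 + d^2 = int n"
    unfolding four_squares_def by auto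
  then show "q \<in> lipschitz_of_norm n"
    using lipschitz_quat_of_ints lipschitz_imp_hurwitz inorm_quat_of_ints
    unfolding lipschitz_of_norm_def by (simp add: hurwitz_of_norm_iff_inorm)
qed

lemma half_of_norm_eq_image: "half_of_norm n = quat_of_halves ` odd_four_squares n"
proof (intro equalityI subsetI)
  fix q assume "q \<in> half_of_norm n"
  then have q: "lipschitz (q - omega)" "\<not> lipschitz q" "qnorm q = of_nat n"
    unfolding half_of_norm_def hurwitz_of_norm_def hurwitz_def by auto
  then obtain a b c d where "re q - 1/2 = of_int a" "qi q - 1/2 = of_int b" "qj q - 1/2 = of_int c"
    "qk q - 1/2 = of_int d" by (auto elim!: lipschitz_obtain)
  then have e: "re q = of_int (2*a+1) / 2" "qi q = of_int (2*b+1) / 2" "qj q = of_int (2*c+1) / 2"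
    "qk q = of_int (2*d+1) / 2" by (simp_all add: field_simps)
  have "(of_int ((2*a+1)^2 + (2*b+1)^2 + (2*c+1)^2 + (2*d+1)^2) :: rat) = of_int (4 * int n)"
    using q(3) unfolding qnorm_def e by (simp add: power2_eq_square field_simps)
  then have "(2*a+1, 2*b+1, 2*c+1, 2*d+1) \<in> odd_four_squares n"
    unfolding odd_four_squares_def by (simp only: of_int_eq_iff) simp
  moreover have "q = quat_of_halves (2*a+1, 2*b+1, 2*c+1, 2*d+1)"
    unfolding quat_of_halves_def using e by (auto intro: quat_eqI)
  ultimately show "q \<in> quat_of_halves ` odd_four_squares n" by blast
next
  fix q assume "q \<in> quat_of_halves ` odd_four_squares n"
  then obtain a b c d where abcd: "q = quat_of_halves (a, b, c, d)" "odd a" "odd b" "odd c" "odd d"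
    "a^2 + b^2 + c^2 + d^2 = 4 * int n"
    unfolding odd_four_squares_def by auto
  have r: "re (q - omega) = of_int (a - 1) / 2" "qi (q - omega) = of_int (b - 1) / 2"
    "qj (q - omega) = of_int (c - 1) / 2" "qk (q - omega) = of_int (d - 1) / 2"
    unfolding abcd(1) quat_of_halves_def by (simp_all add: field_simps)
  have "lipschitz (q - omega)" using abcd(2-5) unfolding lipschitz_def r half_of_int_Ints_iff by simp
  then have "hurwitz q" unfolding hurwitz_def by blast
  moreover have "\<not> lipschitz q" using abcd(1,2) unfolding lipschitz_def quat_of_halves_def
    by (simp add: half_of_int_Ints_iff)
  moreover have "4 * qnorm q = of_int (a^2 + b^2 + c^2 + d^2)"
    unfolding abcd(1) quat_of_halves_def qnorm_def by (simp add: power2_eq_square field_simps)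
  then have "qnorm q = of_nat n" using abcd(6) by simp
  ultimately show "q \<in> half_of_norm n" unfolding half_of_norm_def hurwitz_of_norm_def by simp
qed

lemma card_four_squares: "card (four_squares n) = card (lipschitz_of_norm n)"
  unfolding lipschitz_of_norm_eq_image by (rule card_image[symmetric]) (rule inj_on_subset[OF inj_quat_of_ints], simp)

lemma card_odd_four_squares: "card (odd_four_squares n) = card (half_of_norm n)"
proof -
  have "inj quat_of_halves" unfolding quat_of_halves_def by (auto intro!: injI)
  then show ?thesis unfolding half_of_norm_eq_image by (simp add: card_image inj_on_subset)
qed

lemma four_squares_1:
  "four_squares 1 = {(1,0,0,0), (-1,0,0,0), (0,1,0,0), (0,-1,0,0), (0,0,1,0), (0,0,-1,0), (0,0,0,1), (0,0,0,-1)}"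
proof (intro equalityI subsetI)
  fix x assume "x \<in> four_squares 1"
  then obtain a b c d where x: "x = (a, b, c, d)" "a^2 + b^2 + c^2 + d^2 = 1" unfolding four_squares_def by auto
  have unit: "y = -1 \<or> y = 0 \<or> y = 1" if "y^2 \<le> (1::int)" for y
    using that abs_le_square_iff[of y 1] by auto
  have "a^2 \<le> 1" "b^2 \<le> 1" "c^2 \<le> 1" "d^2 \<le> 1"
    using x(2) zero_le_power2[of a] zero_le_power2[of b] zero_le_power2[of c] zero_le_power2[of d] by linarith+
  then have "a = -1 \<or> a = 0 \<or> a = 1" "b = -1 \<or> b = 0 \<or> b = 1" "c = -1 \<or> c = 0 \<or> c = 1"
    "d = -1 \<or> d = 0 \<or> d = 1" using unit by blast+
  then show "x \<in> {(1,0,0,0), (-1,0,0,0), (0,1,0,0), (0,-1,0,0), (0,0,1,0), (0,0,-1,0), (0,0,0,1), (0,0,0,-1)}"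
    using x by (elim disjE) simp_all
qed (auto simp: four_squares_def)

lemma card_hurwitz_of_norm_1: "card (hurwitz_of_norm 1) = 24"
proof -
  have "card (lipschitz_of_norm 1) = 8" using card_four_squares[of 1] four_squares_1 by simp
  then show ?thesis using card_hurwitz_of_norm_split[of 1] card_half_of_norm[of 1] by simp
qed

theorem card_four_squares_odd:
  assumes "odd m"
  shows "card (four_squares m) = 8 * sigma m" "card (odd_four_squares m) = 16 * sigma m"
proof -
  have "3 * card (lipschitz_of_norm m) = 24 * sigma m"
    using card_hurwitz_of_norm_odd[OF assms] card_hurwitz_of_norm_1 card_hurwitz_of_norm_split[of m]
      card_half_of_norm[OF assms] by simp
  then show "card (four_squares m) = 8 * sigma m" "card (odd_four_squares m) = 16 * sigma m"
    using card_four_squares card_odd_four_squares card_half_of_norm[OF assms] by simp_all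
qed

section \<open>The form \<open>x\<^sup>2 + y\<^sup>2 + 2 z\<^sup>2 + 2 w\<^sup>2\<close>\<close>

lemma half_sum_diff_eq:
  fixes c d :: int
  assumes "even (c + d)"
  shows "(c + d) div 2 + (c - d) div 2 = c" "(c + d) div 2 - (c - d) div 2 = d"
  using assms by presburger+

lemma sum_four_squares_mod_4:
  fixes a b c d :: int
  assumes "even a" "even b" "odd c" "odd d"
  shows "(a^2 + b^2 + c^2 + d^2) mod 4 = 2"
proof -
  obtain a' b' c' d' where "a = 2 * a'" "b = 2 * b'" "c = 2 * c' + 1" "d = 2 * d' + 1"
    using assms by (auto elim!: evenE oddE)
  define k where "k = a'^2 + b'^2 + c'^2 + c' + d'^2 + d'"
  have "a^2 + b^2 + c^2 + d^2 = 4 * k + 2"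
    unfolding k_def using \<open>a = 2 * a'\<close> \<open>b = 2 * b'\<close> \<open>c = 2 * c' + 1\<close> \<open>d = 2 * d' + 1\<close>
    by (simp add: power2_eq_square algebra_simps)
  then show ?thesis by presburger
qed

lemma finite_four_squares: "finite (four_squares n)"
proof -
  have "finite (lipschitz_of_norm n)"
    unfolding lipschitz_of_norm_def using finite_hurwitz_of_norm by simp
  then show ?thesis
    unfolding lipschitz_of_norm_eq_image by (rule finite_imageD) (rule inj_on_subset[OF inj_quat_of_ints], simp)
qed

lemma card_four_squares_odd_last_pair:
  assumes "odd m"
  shows "card {(a::int, b::int, c::int, d::int). a^2 + b^2 + c^2 + d^2 = int m \<and> odd (c + d)} = 4 * sigma m"
proof -
  define T where "T = {(a::int, b::int, c::int, d::int). a^2 + b^2 + c^2 + d^2 = int m \<and> odd (c + d)}"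
  define swap where "swap = (\<lambda>(a::int, b::int, c::int, d::int). (c, d, a, b))"
  have "bij swap" unfolding swap_def by (rule o_bij[where g = "\<lambda>(a, b, c, d). (c, d, a, b)"]) auto
  then have "card (swap -` T) = card T" by (simp add: bij_def card_vimage_inj)
  moreover have "four_squares m = T \<union> swap -` T" "T \<inter> swap -` T = {}"
  proof -
    have "x \<in> four_squares m \<longleftrightarrow> x \<in> T \<or> x \<in> swap -` T" "\<not> (x \<in> T \<and> x \<in> swap -` T)" for x
    proof -
      obtain a b c d where x: "x = (a, b, c, d)" by (cases x)
      have "a^2 + b^2 + c^2 + d^2 = int m \<Longrightarrow> odd (a + b + c + d)"
        using assms even_sum_four_squares_iff[of a b c d] by simp
      moreover have "c^2 + d^2 + a^2 + b^2 = a^2 + b^2 + c^2 + d^2" by simp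
      ultimately show "x \<in> four_squares m \<longleftrightarrow> x \<in> T \<or> x \<in> swap -` T" "\<not> (x \<in> T \<and> x \<in> swap -` T)"
        unfolding x four_squares_def T_def swap_def by auto
    qed
    then show "four_squares m = T \<union> swap -` T" "T \<inter> swap -` T = {}" by blast+
  qed
  moreover note finite_four_squares[of m]
  ultimately have "card (four_squares m) = 2 * card T" by (simp add: card_Un_disjoint)
  then show ?thesis using card_four_squares_odd(1)[OF assms] unfolding T_def by simp
qed

text \<open>Each count is transported by an integral linear substitution, injective on \<open>\<int>\<^sup>4\<close>, whose image
  contains the target set; the conditions then correspond elementwise.\<close>

lemma card_eq_by_linear_substitution:
  fixes f :: "int \<times> int \<times> int \<times> int \<Rightarrow> int \<times> int \<times> int \<times> int"
  assumes "inj f" "B \<subseteq> range f" "\<And>a b c d. f (a, b, c, d) \<in> B \<longleftrightarrow> (a, b, c, d) \<in> A"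
  shows "card A = card B"
proof -
  have "f -` B = A"
  proof (intro set_eqI)
    fix t :: "int \<times> int \<times> int \<times> int"
    obtain a b c d where "t = (a, b, c, d)" by (cases t)
    then show "t \<in> f -` B \<longleftrightarrow> t \<in> A" using assms(3) by simp
  qed
  then show ?thesis using card_vimage_inj[OF assms(1,2)] by simp
qed

lemma card_form_4m_even_even_odd_odd:
  assumes "odd m"
  shows "card {(x::int, y::int, z::int, w::int).
    x^2 + y^2 + 2*z^2 + 2*w^2 = 4 * int m \<and> even x \<and> even y \<and> odd z \<and> odd w} = 4 * sigma m"
proof -
  let ?h = "\<lambda>(a::int, b::int, c::int, d::int). (2 * a, 2 * b, c + d, c - d)"
  have "card {(a::int, b::int, c::int, d::int). a^2 + b^2 + c^2 + d^2 = int m \<and> odd (c + d)} =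
    card {(x::int, y::int, z::int, w::int).
      x^2 + y^2 + 2*z^2 + 2*w^2 = 4 * int m \<and> even x \<and> even y \<and> odd z \<and> odd w}"
  proof (rule card_eq_by_linear_substitution[of ?h])
    show "inj ?h" by (auto intro!: injI)
    show "{(x, y, z, w). x^2 + y^2 + 2*z^2 + 2*w^2 = 4 * int m \<and> even x \<and> even y \<and> odd z \<and> odd w} \<subseteq> range ?h"
    proof (clarify)
      fix x y z w :: int assume "even x" "even y" "odd z" "odd w"
      then have "(x, y, z, w) = ?h (x div 2, y div 2, (z + w) div 2, (z - w) div 2)"
        using half_sum_diff_eq[of z w] by simp
      then show "(x, y, z, w) \<in> range ?h" by blast
    qed
    fix a b c d :: int
    have "(2 * a)^2 + (2 * b)^2 + 2 * (c + d)^2 + 2 * (c - d)^2 = 4 * (a^2 + b^2 + c^2 + d^2)"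
      by (simp add: power2_eq_square algebra_simps)
    then show "?h (a, b, c, d) \<in> {(x, y, z, w). x^2 + y^2 + 2*z^2 + 2*w^2 = 4 * int m \<and> even x \<and> even y \<and> odd z \<and> odd w}
      \<longleftrightarrow> (a, b, c, d) \<in> {(a, b, c, d). a^2 + b^2 + c^2 + d^2 = int m \<and> odd (c + d)}"
      by (simp only: prod.case mem_Collect_eq) auto
  qed
  then show ?thesis using card_four_squares_odd_last_pair[OF assms] by simp
qed

lemma card_form_8m_even_even_odd_odd:
  assumes "odd m"
  shows "card {(x::int, y::int, z::int, w::int).
    x^2 + y^2 + 2*z^2 + 2*w^2 = 8 * int m \<and> even x \<and> even y \<and> odd z \<and> odd w} = 16 * sigma m"
proof -
  let ?g = "\<lambda>(a::int, b::int, c::int, d::int). (a + b, a - b, c, d)"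
  have "card (odd_four_squares m) = card {(x::int, y::int, z::int, w::int).
      x^2 + y^2 + 2*z^2 + 2*w^2 = 8 * int m \<and> even x \<and> even y \<and> odd z \<and> odd w}"
  proof (rule card_eq_by_linear_substitution[of ?g])
    show "inj ?g" by (auto intro!: injI)
    show "{(x, y, z, w). x^2 + y^2 + 2*z^2 + 2*w^2 = 8 * int m \<and> even x \<and> even y \<and> odd z \<and> odd w} \<subseteq> range ?g"
    proof (clarify)
      fix x y z w :: int assume "even x" "even y"
      then have "(x, y, z, w) = ?g ((x + y) div 2, (x - y) div 2, z, w)"
        using half_sum_diff_eq[of x y] by simp
      then show "(x, y, z, w) \<in> range ?g" by blast
    qed
    fix a b c d :: int
    have "(a + b)^2 + (a - b)^2 + 2*c^2 + 2*d^2 = 2 * (a^2 + b^2 + c^2 + d^2)"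
      by (simp add: power2_eq_square algebra_simps)
    moreover have "a^2 + b^2 + c^2 + d^2 \<noteq> 4 * int m" if "even a" "even b" "odd c" "odd d"
      using sum_four_squares_mod_4[OF that] by auto
    ultimately show "?g (a, b, c, d) \<in> {(x, y, z, w). x^2 + y^2 + 2*z^2 + 2*w^2 = 8 * int m \<and> even x \<and> even y \<and> odd z \<and> odd w}
      \<longleftrightarrow> (a, b, c, d) \<in> odd_four_squares m"
      unfolding odd_four_squares_def by (simp only: prod.case mem_Collect_eq) auto
  qed
  then show ?thesis using card_four_squares_odd(2)[OF assms] by simp
qed

lemma card_form_4m_odd_odd_mixed:
  assumes "odd m"
  shows "card {(x::int, y::int, z::int, w::int).
    x^2 + y^2 + 2*z^2 + 2*w^2 = 4 * int m \<and> odd x \<and> odd y \<and> (odd z \<longleftrightarrow> even w)} = 16 * sigma m"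
proof -
  let ?f = "\<lambda>(x::int, y::int, z::int, w::int). (x, y, z + w, z - w)"
  have "card {(x::int, y::int, z::int, w::int).
      x^2 + y^2 + 2*z^2 + 2*w^2 = 4 * int m \<and> odd x \<and> odd y \<and> (odd z \<longleftrightarrow> even w)} =
    card (odd_four_squares m)"
  proof (rule card_eq_by_linear_substitution[of ?f])
    show "inj ?f" by (auto intro!: injI)
    show "odd_four_squares m \<subseteq> range ?f"
    proof (clarify)
      fix a b c d :: int assume "(a, b, c, d) \<in> odd_four_squares m"
      then have "(a, b, c, d) = ?f (a, b, (c + d) div 2, (c - d) div 2)"
        using half_sum_diff_eq[of c d] unfolding odd_four_squares_def by simp
      then show "(a, b, c, d) \<in> range ?f" by blast
    qed
    fix x y z w :: int
    have "x^2 + y^2 + (z + w)^2 + (z - w)^2 = x^2 + y^2 + 2*z^2 + 2*w^2"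
      by (simp add: power2_eq_square algebra_simps)
    then show "?f (x, y, z, w) \<in> odd_four_squares m \<longleftrightarrow> (x, y, z, w) \<in> {(x, y, z, w).
      x^2 + y^2 + 2*z^2 + 2*w^2 = 4 * int m \<and> odd x \<and> odd y \<and> (odd z \<longleftrightarrow> even w)}"
      unfolding odd_four_squares_def by (simp only: prod.case mem_Collect_eq) auto
  qed
  then show ?thesis using card_four_squares_odd(2)[OF assms] by simp
qed

theorem theorem58:
  fixes m :: nat
  assumes "odd m" and "m > 0"
  shows "(card {(x::int, y::int, z::int, w::int).
            x^2 + y^2 + 2*z^2 + 2*w^2 = 4 * int m \<and> even x \<and> even y \<and> odd z \<and> odd w}
           = 4 * sigma m) \<and>
          (card {(x::int, y::int, z::int, w::int).
            x^2 + y^2 + 2*z^2 + 2*w^2 = 8 * int m \<and> even x \<and> even y \<and> odd z \<and> odd w}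
           = 16 * sigma m) \<and>
          (card {(x::int, y::int, z::int, w::int).
            x^2 + y^2 + 2*z^2 + 2*w^2 = 4 * int m \<and> odd x \<and> odd y \<and> (odd z \<longleftrightarrow> even w)}
           = 16 * sigma m)"
  using card_form_4m_even_even_odd_odd card_form_8m_even_even_odd_odd card_form_4m_odd_odd_mixed
    assms(1) by blast

end
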